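(* Let $r\ge 1$, $n\ge r+1$, and let $K$ be a pure $r$-dimensional simplicial complex on $n$ vertices with $\beta_i(K)=0$ for all $i\in\{1,\dots,r\}$. Then $$\mathfrak{q}_{r-1}(K)\le rn-r^2+1,$$ with equality if and only if $K\cong{\sf T}_n^r$.
   Context: A (finite abstract) simplicial complex $K$ on a finite vertex set $V(K)$ is a family of subsets of $V(K)$ closed under taking subsets and containing every singleton; it is on $n$ vertices if $|V(K)|=n$. An $i$-face is a member of cardinality $i+1$; $S_i(K)$ is the set of $i$-faces; facets are inclusion-maximal faces; $K$ is pure if all facets have the same dimension. $\beta_i(K)=\dim_{\mathbb R}H_i(K;\mathbb R)$ is the $i$-th Betti number (real simplicial homology). For an $i$-face $F$, $d_K(F)$ is the number of $(i+1)$-faces containing $F$; two distinct $i$-faces are up-neighbors if their union is an $(i+1)$-face. The signless up Laplacian $Q_i^{\mathrm{up}}(K)$ is the operator on $\mathbb{R}^{S_i(K)}$ given by $(Q_i^{\mathrm{up}}(K)f)(F)=d_K(F)f(F)+\sum_{F'\text{ up-neighbor of }F}f(F')$, and $\mathfrak{q}_i(K)$ is its largest eigenvalue. The tented complex ${\sf T}_n^r$ is the pure $r$-dimensional complex on $[n]$ whose facets are the sets $\{n\}\cup F$ with $F$ an $r$-subset of $[n-1]$. *)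

theory Defs
  imports "HOL-Analysis.Analysis" "HOL-Library.Function_Algebras"
begin

definition simplicial_complex :: "'a set \<Rightarrow> 'a set set \<Rightarrow> bool" where
  "simplicial_complex V K \<longleftrightarrow> finite V \<and> (\<forall>F\<in>K. F \<subseteq> V)
     \<and> (\<forall>F\<in>K. \<forall>G. G \<subseteq> F \<longrightarrow> G \<in> K) \<and> (\<forall>v\<in>V. {v} \<in> K)"

definition faces :: "'a set set \<Rightarrow> nat \<Rightarrow> 'a set set" where
  "faces K i = {F \<in> K. card F = i + 1}"

definition facets :: "'a set set \<Rightarrow> 'a set set" where
  "facets K = {F \<in> K. \<forall>G\<in>K. F \<subseteq> G \<longrightarrow> G = F}"

definition pure_dim :: "'a set set \<Rightarrow> nat \<Rightarrow> bool" where
  "pure_dim K r \<longleftrightarrow> K \<noteq> {} \<and> (\<forall>F\<in>facets K. card F = r + 1)"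

definition chains :: "'a set set \<Rightarrow> nat \<Rightarrow> ('a set \<Rightarrow> real) set" where
  "chains K i = {f. \<forall>F. F \<notin> faces K i \<longrightarrow> f F = 0}"

text \<open>Orientation sign of the facet G = F - {v} of F, w.r.t. the vertex order:
(-1)^(number of vertices of F smaller than v).\<close>
definition incidence_sign :: "'a::linorder set \<Rightarrow> 'a set \<Rightarrow> real" where
  "incidence_sign F G = (-1) ^ card {w \<in> F. w < (THE v. v \<in> F - G)}"

text \<open>Boundary map from i-chains to (i-1)-chains, i >= 1.\<close>
definition boundary :: "'a::linorder set set \<Rightarrow> nat \<Rightarrow> ('a set \<Rightarrow> real) \<Rightarrow> ('a set \<Rightarrow> real)" where
  "boundary K i f = (\<lambda>G. if G \<in> faces K (i - 1)
      then (\<Sum>F\<in>{F \<in> faces K i. G \<subseteq> F}. incidence_sign F G * f F) else 0)"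

definition fscale :: "real \<Rightarrow> ('a set \<Rightarrow> real) \<Rightarrow> ('a set \<Rightarrow> real)" where
  "fscale c f = (\<lambda>x. c * f x)"

definition betti :: "'a::linorder set set \<Rightarrow> nat \<Rightarrow> nat" where
  "betti K i = vector_space.dim fscale {f \<in> chains K i. boundary K i f = (\<lambda>_. 0)}
             - vector_space.dim fscale (boundary K (i + 1) ` chains K (i + 1))"

definition up_degree :: "'a set set \<Rightarrow> 'a set \<Rightarrow> nat" where
  "up_degree K F = card {G \<in> faces K (card F). F \<subseteq> G}"

definition up_neighbors :: "'a set set \<Rightarrow> nat \<Rightarrow> 'a set \<Rightarrow> 'a set set" where
  "up_neighbors K i F = {F' \<in> faces K i. F' \<noteq> F \<and> F \<union> F' \<in> faces K (i + 1)}"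

definition signless_up_laplacian :: "'a set set \<Rightarrow> nat \<Rightarrow> ('a set \<Rightarrow> real) \<Rightarrow> ('a set \<Rightarrow> real)" where
  "signless_up_laplacian K i f = (\<lambda>F. if F \<in> faces K i
      then real (up_degree K F) * f F + (\<Sum>F'\<in>up_neighbors K i F. f F') else 0)"

definition is_eigenvalue_Qup :: "'a set set \<Rightarrow> nat \<Rightarrow> real \<Rightarrow> bool" where
  "is_eigenvalue_Qup K i \<mu> \<longleftrightarrow> (\<exists>f\<in>chains K i. f \<noteq> (\<lambda>_. 0) \<and>
      signless_up_laplacian K i f = (\<lambda>F. \<mu> * f F))"

definition q_up :: "'a set set \<Rightarrow> nat \<Rightarrow> real" where
  "q_up K i = Max {\<mu>. is_eigenvalue_Qup K i \<mu>}"

definition tented :: "nat \<Rightarrow> nat \<Rightarrow> nat set set" where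
  "tented n r = {G. \<exists>F. F \<subseteq> {1..n-1} \<and> card F = r \<and> G \<subseteq> insert n F}"

definition complex_iso :: "'a set \<Rightarrow> 'a set set \<Rightarrow> 'b set \<Rightarrow> 'b set set \<Rightarrow> bool" where
  "complex_iso V K W L \<longleftrightarrow> (\<exists>\<phi>. bij_betw \<phi> V W \<and> (\<lambda>F. \<phi> ` F) ` K = L)"

end

theory Submission
  imports Defs "Jordan_Normal_Form.Spectral_Radius"
begin

text \<open>
  The signless up Laplacian on \<open>(r-1)\<close>-faces factors through the \<open>r\<close>-faces: if \<open>x\<close> is an
  eigenvector for \<open>\<mu>\<close>, its lift \<open>y \<sigma> = \<Sum>F\<subset>\<sigma>. x F\<close> satisfies
  \<open>\<mu> y \<sigma> = \<Sum>F\<subset>\<sigma>. \<Sum>\<tau>\<supset>F. y \<tau>\<close>, a sum with \<open>weight \<sigma>\<close> terms. The weight of \<open>\<sigma>\<close> is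
  \<open>r + 1\<close> plus, for each vertex \<open>w\<close> outside \<open>\<sigma>\<close>, the number of exchanges \<open>\<sigma> - v + w\<close>
  that are faces. Since \<open>H\<^sub>r = 0\<close> and there are no \<open>(r+1)\<close>-faces, no \<open>r\<close>-cycle survives;
  in particular no \<open>(r+1)\<close>-simplex has all its facets in \<open>K\<close>, so each outside vertex
  contributes at most \<open>r\<close> and the weight is at most \<open>r(n - r) + 1\<close>. Looking at a top face
  where \<open>|y|\<close> is maximal gives \<open>\<mu> \<le> r(n - r) + 1\<close>.

  In the equality case the faces of maximal \<open>|y|\<close> have maximal weight and are closed under
  exchanges, so every outside vertex is blocked by exactly one vertex of \<open>\<sigma>\<close>. A second
  forbidden configuration (two \<open>(r+1)\<close>-simplices glued along a missing face) forces one
  vertex \<open>c\<close> to block all outside vertices, and \<open>c\<close> survives every exchange. Hence all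
  \<open>(r+1)\<close>-sets through \<open>c\<close> are faces, and no top face avoids \<open>c\<close>: \<open>K\<close> is the cone with
  apex \<open>c\<close>, i.e. the tented complex. Conversely, for the cone the up-degrees of the
  \<open>(r-1)\<close>-faces form an eigenvector with eigenvalue \<open>r(n - r) + 1\<close>.
\<close>

lemma subset_card_Suc_removeE:
  assumes "finite S" "F \<subseteq> S" "card S = Suc (card F)"
  obtains t where "t \<in> S" "F = S - {t}"
proof -
  have "card (S - F) = 1" using assms by (simp add: card_Diff_subset finite_subset)
  then obtain t where "S - F = {t}" by (meson card_1_singletonE)
  then show ?thesis using that assms(2) by blast
qed

lemma sum_mono_eqD:
  fixes f g :: "'b \<Rightarrow> 'c::ordered_cancel_comm_monoid_add"
  assumes "finite A" "\<And>a. a \<in> A \<Longrightarrow> f a \<le> g a" "sum f A = sum g A" "a \<in> A"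
  shows "f a = g a"
proof (rule ccontr)
  assume "f a \<noteq> g a"
  then have "f a < g a" using assms(2)[OF assms(4)] by simp
  then have "sum f A < sum g A" using assms by (intro sum_strict_mono_ex1) auto
  then show False using assms(3) by simp
qed

text \<open>The maximum principle behind both the eigenvalue bound and its equality case.\<close>
lemma double_sum_max_principle:
  fixes y :: "'b \<Rightarrow> real"
  assumes finA: "finite A" and finB: "\<And>F. F \<in> A \<Longrightarrow> finite (B F)"
    and le_M: "\<forall>F\<in>A. \<forall>\<tau>\<in>B F. \<bar>y \<tau>\<bar> \<le> M"
    and eq: "\<mu> * y\<^sub>0 = (\<Sum>F\<in>A. \<Sum>\<tau>\<in>B F. y \<tau>)" and "\<bar>y\<^sub>0\<bar> = M" "0 < M"
    and card_le: "(\<Sum>F\<in>A. real (card (B F))) \<le> R" and "R \<le> \<mu>"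
  shows "\<mu> = R" "(\<Sum>F\<in>A. real (card (B F))) = R" "\<forall>F\<in>A. \<forall>\<tau>\<in>B F. \<bar>y \<tau>\<bar> = M"
proof -
  let ?C = "\<Sum>F\<in>A. real (card (B F))" and ?S = "\<Sum>F\<in>A. \<Sum>\<tau>\<in>B F. \<bar>y \<tau>\<bar>"
  have "0 \<le> \<mu>" using card_le \<open>R \<le> \<mu>\<close> sum_nonneg[of A "\<lambda>F. real (card (B F))"] by linarith
  have inner_le: "(\<Sum>\<tau>\<in>B F. \<bar>y \<tau>\<bar>) \<le> (\<Sum>\<tau>\<in>B F. M)" if "F \<in> A" for F
    using le_M that by (intro sum_mono) auto
  have "\<mu> * M = \<bar>\<Sum>F\<in>A. \<Sum>\<tau>\<in>B F. y \<tau>\<bar>"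
    using eq \<open>\<bar>y\<^sub>0\<bar> = M\<close> \<open>0 \<le> \<mu>\<close> by (metis abs_mult abs_of_nonneg)
  also have "\<dots> \<le> ?S"
    by (rule order_trans[OF sum_abs]) (intro sum_mono sum_abs)
  finally have "\<mu> * M \<le> ?S" .
  moreover have "?S \<le> (\<Sum>F\<in>A. \<Sum>\<tau>\<in>B F. M)"
    using inner_le by (rule sum_mono)
  moreover have "(\<Sum>F\<in>A. \<Sum>\<tau>\<in>B F. M) = ?C * M"
    by (simp add: sum_distrib_right)
  moreover have "?C * M \<le> R * M" "R * M \<le> \<mu> * M"
    using card_le \<open>R \<le> \<mu>\<close> \<open>0 < M\<close> by simp_all
  ultimately have tight: "?S = (\<Sum>F\<in>A. \<Sum>\<tau>\<in>B F. M)" "?C * M = R * M" "R * M = \<mu> * M"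
    by linarith+
  then show "\<mu> = R" "?C = R" using \<open>0 < M\<close> by simp_all
  show "\<forall>F\<in>A. \<forall>\<tau>\<in>B F. \<bar>y \<tau>\<bar> = M"
  proof (intro ballI)
    fix F \<tau> assume "F \<in> A" "\<tau> \<in> B F"
    have "(\<Sum>\<tau>\<in>B F. \<bar>y \<tau>\<bar>) = (\<Sum>\<tau>\<in>B F. M)"
      using sum_mono_eqD[OF finA inner_le tight(1) \<open>F \<in> A\<close>] by simp
    then show "\<bar>y \<tau>\<bar> = M"
      using sum_mono_eqD[of "B F" "\<lambda>\<tau>. \<bar>y \<tau>\<bar>" "\<lambda>_. M" \<tau>] finB le_M \<open>F \<in> A\<close> \<open>\<tau> \<in> B F\<close> by blast
  qed
qed

section \<open>Symmetric kernels have real eigenvalues\<close>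

lemma hermitian_mat_eigenvalue_real:
  fixes B :: "complex mat"
  assumes B: "B \<in> carrier_mat m m"
    and herm: "\<And>i j. i < m \<Longrightarrow> j < m \<Longrightarrow> B $$ (j, i) = cnj (B $$ (i, j))"
    and "eigenvalue B \<mu>"
  shows "\<mu> \<in> \<real>"
proof -
  obtain w where w: "w \<in> carrier_vec m" "w \<noteq> 0\<^sub>v m" "B *\<^sub>v w = \<mu> \<cdot>\<^sub>v w"
    using \<open>eigenvalue B \<mu>\<close> B unfolding eigenvalue_def eigenvector_def by auto
  have Bw: "(B *\<^sub>v w) $ a = (\<Sum>b<m. B $$ (a, b) * w $ b)" if "a < m" for a
    using that B w(1) by (auto simp: scalar_prod_def atLeast0LessThan intro: sum.cong)
  define s where "s = (\<Sum>a<m. \<Sum>b<m. cnj (w $ a) * B $$ (a, b) * w $ b)"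
  have herm': "cnj (B $$ (a, b)) = B $$ (b, a)" if "a < m" "b < m" for a b
    using herm[OF that] by simp
  have "cnj s = (\<Sum>a<m. \<Sum>b<m. w $ a * B $$ (b, a) * cnj (w $ b))"
    unfolding s_def cnj_sum by (intro sum.cong refl) (simp add: herm')
  also have "\<dots> = s"
    unfolding s_def by (subst sum.swap) (simp add: ac_simps)
  finally have "s \<in> \<real>"
    using Reals_cnj_iff by blast
  define N where "N = (\<Sum>a<m. (cmod (w $ a))\<^sup>2)"
  have "s = (\<Sum>a<m. cnj (w $ a) * (B *\<^sub>v w) $ a)"
    unfolding s_def using Bw by (simp add: sum_distrib_left mult.assoc)
  also have "\<dots> = \<mu> * (\<Sum>a<m. w $ a * cnj (w $ a))"
    using w(1,3) by (simp add: sum_distrib_left ac_simps)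
  also have "\<dots> = \<mu> * of_real N"
    by (simp only: N_def of_real_sum complex_norm_square)
  finally have s: "s = \<mu> * of_real N" .
  obtain a where "a < m" "w $ a \<noteq> 0"
    using w(1,2) by (metis carrier_vecD eq_vecI index_zero_vec)
  then have "0 < N"
    unfolding N_def by (intro sum_pos2[of _ a]) auto
  then have "\<mu> = s / of_real N" using s by simp
  then show ?thesis using \<open>s \<in> \<real>\<close> by simp
qed

lemma symmetric_real_mat_has_eigenvalue:
  fixes A :: "real mat"
  assumes A: "A \<in> carrier_mat m m" and "0 < m"
    and sym: "\<And>i j. i < m \<Longrightarrow> j < m \<Longrightarrow> A $$ (j, i) = A $$ (i, j)"
  shows "\<exists>t. eigenvalue A t"
proof -
  let ?B = "map_mat complex_of_real A"
  have B: "?B \<in> carrier_mat m m" using A by simp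
  obtain \<mu> where \<mu>: "eigenvalue ?B \<mu>"
    using spectrum_non_empty[OF B \<open>0 < m\<close>] unfolding spectrum_def by auto
  have "\<mu> \<in> \<real>"
  proof (rule hermitian_mat_eigenvalue_real[OF B _ \<mu>])
    fix i j assume "i < m" "j < m"
    then show "?B $$ (j, i) = cnj (?B $$ (i, j))" using A sym[of i j] by simp
  qed
  then obtain t where t: "\<mu> = of_real t" by (auto elim: Reals_cases)
  have "poly (char_poly ?B) (of_real t) = 0"
    using \<mu> t eigenvalue_root_char_poly[OF B] by simp
  then have "poly (char_poly A) t = 0"
    by (simp add: of_real_hom.char_poly_hom[OF A] of_real_hom.poly_map_poly)
  then show ?thesis using eigenvalue_root_char_poly[OF A] by blast
qed

definition kernel_eigenvalue :: "'b set \<Rightarrow> ('b \<Rightarrow> 'b \<Rightarrow> real) \<Rightarrow> real \<Rightarrow> bool" where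
  "kernel_eigenvalue X k \<mu> \<longleftrightarrow> (\<exists>f. (\<forall>x. x \<notin> X \<longrightarrow> f x = 0) \<and> f \<noteq> (\<lambda>_. 0)
     \<and> (\<forall>x\<in>X. (\<Sum>y\<in>X. k x y * f y) = \<mu> * f x))"

lemma kernel_mat_mult_vec_index:
  fixes v :: "real vec"
  assumes e: "bij_betw e {..<m} X" and "a < m" "v \<in> carrier_vec m" "\<And>b. b < m \<Longrightarrow> v $ b = g (e b)"
  shows "(mat m m (\<lambda>(a, b). k (e a) (e b)) *\<^sub>v v) $ a = (\<Sum>y\<in>X. k (e a) y * g y)"
proof -
  have "(mat m m (\<lambda>(a, b). k (e a) (e b)) *\<^sub>v v) $ a = (\<Sum>b<m. k (e a) (e b) * g (e b))"
    using assms(2-) by (auto simp: scalar_prod_def atLeast0LessThan intro: sum.cong)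
  also have "\<dots> = (\<Sum>y\<in>X. k (e a) y * g y)"
    by (rule sum.reindex_bij_betw[OF e])
  finally show ?thesis .
qed

lemma kernel_eigenvalue_iff_eigenvalue:
  assumes e: "bij_betw e {..<m} X"
  shows "kernel_eigenvalue X k \<mu> \<longleftrightarrow> eigenvalue (mat m m (\<lambda>(a, b). k (e a) (e b))) \<mu>"
    (is "_ \<longleftrightarrow> eigenvalue ?A \<mu>")
proof
  assume "kernel_eigenvalue X k \<mu>"
  then obtain f where f: "\<forall>x. x \<notin> X \<longrightarrow> f x = 0" "f \<noteq> (\<lambda>_. 0)"
    "\<forall>x\<in>X. (\<Sum>y\<in>X. k x y * f y) = \<mu> * f x"
    unfolding kernel_eigenvalue_def by blast
  define v where "v = vec m (\<lambda>a. f (e a))"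
  have v: "v \<in> carrier_vec m" "\<And>b. b < m \<Longrightarrow> v $ b = f (e b)" unfolding v_def by auto
  obtain x where "f x \<noteq> 0" using f(2) by auto
  then have "x \<in> e ` {..<m}" using f(1) bij_betw_imp_surj_on[OF e] by blast
  then obtain a where "a < m" "e a = x" by blast
  then have "v \<noteq> 0\<^sub>v m" using v \<open>f x \<noteq> 0\<close> by (metis index_zero_vec(1))
  moreover have "(?A *\<^sub>v v) $ a = (\<mu> \<cdot>\<^sub>v v) $ a" if "a < m" for a
  proof -
    have "(?A *\<^sub>v v) $ a = (\<Sum>y\<in>X. k (e a) y * f y)" by (rule kernel_mat_mult_vec_index[OF e that v])
    also have "\<dots> = \<mu> * f (e a)" using f(3) bij_betw_apply[OF e] that by simp
    finally show ?thesis using v that by simp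
  qed
  then have "?A *\<^sub>v v = \<mu> \<cdot>\<^sub>v v" using v(1) by (intro eq_vecI) auto
  ultimately show "eigenvalue ?A \<mu>"
    unfolding eigenvalue_def eigenvector_def using v by auto
next
  assume "eigenvalue ?A \<mu>"
  then obtain v where v: "v \<in> carrier_vec m" "v \<noteq> 0\<^sub>v m" "?A *\<^sub>v v = \<mu> \<cdot>\<^sub>v v"
    unfolding eigenvalue_def eigenvector_def by auto
  define f where "f = (\<lambda>x. if x \<in> X then v $ the_inv_into {..<m} e x else 0)"
  have fe: "v $ b = f (e b)" if "b < m" for b
    using that e by (simp add: f_def bij_betw_apply bij_betw_imp_inj_on the_inv_into_f_f)
  have "f \<noteq> (\<lambda>_. 0)"
    using v(1,2) fe by (metis carrier_vecD eq_vecI index_zero_vec)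
  moreover have "(\<Sum>y\<in>X. k x y * f y) = \<mu> * f x" if "x \<in> X" for x
  proof -
    obtain a where a: "a < m" "x = e a" using \<open>x \<in> X\<close> e by (auto simp: bij_betw_def)
    have "(\<Sum>y\<in>X. k x y * f y) = (?A *\<^sub>v v) $ a"
      using kernel_mat_mult_vec_index[OF e a(1) v(1) fe] a by simp
    then show ?thesis using v(1,3) a fe by simp
  qed
  moreover have "\<forall>x. x \<notin> X \<longrightarrow> f x = 0" by (simp add: f_def)
  ultimately show "kernel_eigenvalue X k \<mu>"
    unfolding kernel_eigenvalue_def by blast
qed

lemma symmetric_kernel_eigenvalues:
  assumes "finite X" "X \<noteq> {}" and sym: "\<And>x y. x \<in> X \<Longrightarrow> y \<in> X \<Longrightarrow> k y x = k x y"
  shows "finite {\<mu>. kernel_eigenvalue X k \<mu>}" "{\<mu>. kernel_eigenvalue X k \<mu>} \<noteq> {}"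
proof -
  obtain e where e: "bij_betw e {..<card X} X"
    using ex_bij_betw_nat_finite[OF \<open>finite X\<close>] by (auto simp: atLeast0LessThan)
  let ?A = "mat (card X) (card X) (\<lambda>(a, b). k (e a) (e b))"
  have eq: "{\<mu>. kernel_eigenvalue X k \<mu>} = spectrum ?A"
    unfolding spectrum_def kernel_eigenvalue_iff_eigenvalue[OF e] by simp
  show "finite {\<mu>. kernel_eigenvalue X k \<mu>}"
    unfolding eq by (rule card_finite_spectrum(1)[OF mat_carrier])
  have "\<exists>t. eigenvalue ?A t"
    using assms e by (intro symmetric_real_mat_has_eigenvalue) (auto simp: card_gt_0_iff bij_betw_apply)
  then show "{\<mu>. kernel_eigenvalue X k \<mu>} \<noteq> {}"
    unfolding eq spectrum_def by auto
qed

section \<open>The signless up Laplacian as a coface sum\<close>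

definition common_cofaces :: "'a set set \<Rightarrow> nat \<Rightarrow> 'a set \<Rightarrow> 'a set \<Rightarrow> 'a set set" where
  "common_cofaces K i F G = {\<sigma> \<in> faces K (i + 1). F \<union> G \<subseteq> \<sigma>}"

locale finite_complex =
  fixes V :: "'a set" and K :: "'a set set"
  assumes simplicial_complex: "simplicial_complex V K"
begin

lemma finite_V: "finite V"
  using simplicial_complex unfolding simplicial_complex_def by blast

lemma face_subset_V: "F \<in> K \<Longrightarrow> F \<subseteq> V"
  using simplicial_complex unfolding simplicial_complex_def by blast

lemma face_subset_closed: "F \<in> K \<Longrightarrow> G \<subseteq> F \<Longrightarrow> G \<in> K"
  using simplicial_complex unfolding simplicial_complex_def by blast

lemma finite_face: "F \<in> K \<Longrightarrow> finite F"
  using face_subset_V finite_V finite_subset by blast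

lemma finite_K: "finite K"
proof (rule finite_subset)
  show "K \<subseteq> Pow V" using face_subset_V by blast
qed (simp add: finite_V)

lemma finite_faces: "finite (faces K i)"
  using finite_K unfolding faces_def by simp

lemma faceD:
  assumes "F \<in> faces K i" shows "F \<in> K" "finite F" "card F = i + 1" "F \<subseteq> V"
  using assms finite_face face_subset_V unfolding faces_def by auto

lemma common_cofaces_self: "F \<in> faces K i \<Longrightarrow> card (common_cofaces K i F F) = up_degree K F"
  unfolding common_cofaces_def up_degree_def faces_def by simp

lemma common_cofaces_distinct:
  assumes F: "F \<in> faces K i" and G: "G \<in> faces K i" and "G \<noteq> F"
  shows "common_cofaces K i F G = (if G \<in> up_neighbors K i F then {F \<union> G} else {})"
proof -
  have fin: "finite F" "finite G" and card: "card F = i + 1" "card G = i + 1"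
    using faceD[OF F] faceD[OF G] by auto
  have "\<not> G \<subseteq> F"
  proof
    assume "G \<subseteq> F"
    then have "G = F" using card_subset_eq[OF fin(1)] card by simp
    then show False using \<open>G \<noteq> F\<close> by contradiction
  qed
  then have "card F < card (F \<union> G)"
    using fin by (intro psubset_card_mono) auto
  have coface: "\<sigma> = F \<union> G" if \<sigma>: "\<sigma> \<in> faces K (i + 1)" "F \<union> G \<subseteq> \<sigma>" for \<sigma>
  proof -
    have "finite \<sigma>" "card \<sigma> = i + 2" using faceD[OF \<sigma>(1)] by auto
    moreover have "card (F \<union> G) \<le> card \<sigma>" using \<sigma>(2) \<open>finite \<sigma>\<close> by (rule card_mono[rotated])
    ultimately have "card (F \<union> G) = card \<sigma>"
      using \<open>card F < card (F \<union> G)\<close> card by linarith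
    then show ?thesis using card_subset_eq[OF \<open>finite \<sigma>\<close> \<sigma>(2)] by simp
  qed
  show ?thesis
  proof (cases "F \<union> G \<in> faces K (i + 1)")
    case True
    then have "common_cofaces K i F G = {F \<union> G}"
      using coface unfolding common_cofaces_def by blast
    then show ?thesis using True G \<open>G \<noteq> F\<close> by (simp add: up_neighbors_def)
  next
    case False
    then have "common_cofaces K i F G = {}"
      using coface unfolding common_cofaces_def by blast
    then show ?thesis using False by (simp add: up_neighbors_def)
  qed
qed

lemma signless_up_laplacian_eq_kernel:
  assumes F: "F \<in> faces K i"
  shows "signless_up_laplacian K i f F
    = (\<Sum>G\<in>faces K i. real (card (common_cofaces K i F G)) * f G)"
proof -
  have "(\<Sum>G\<in>faces K i. real (card (common_cofaces K i F G)) * f G)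
      = real (up_degree K F) * f F + (\<Sum>G\<in>faces K i - {F}. real (card (common_cofaces K i F G)) * f G)"
    using F finite_faces by (simp add: sum.remove common_cofaces_self)
  also have "(\<Sum>G\<in>faces K i - {F}. real (card (common_cofaces K i F G)) * f G)
      = (\<Sum>G\<in>faces K i - {F}. if G \<in> up_neighbors K i F then f G else 0)"
    using F by (intro sum.cong refl) (simp add: common_cofaces_distinct)
  also have "\<dots> = (\<Sum>G\<in>{G\<in>faces K i - {F}. G \<in> up_neighbors K i F}. f G)"
    using finite_faces by (intro sum.inter_filter[symmetric]) simp
  also have "{G\<in>faces K i - {F}. G \<in> up_neighbors K i F} = up_neighbors K i F"
    unfolding up_neighbors_def by blast
  finally show ?thesis
    using F unfolding signless_up_laplacian_def by simp
qed

lemma signless_up_laplacian_eq_coface_sum: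
  assumes F: "F \<in> faces K i"
  shows "signless_up_laplacian K i f F
    = (\<Sum>\<sigma>\<in>{\<sigma>\<in>faces K (i + 1). F \<subseteq> \<sigma>}. \<Sum>G\<in>{G\<in>faces K i. G \<subseteq> \<sigma>}. f G)"
proof -
  have "(\<Sum>\<sigma>\<in>{\<sigma>\<in>faces K (i + 1). F \<subseteq> \<sigma>}. \<Sum>G\<in>{G\<in>faces K i. G \<subseteq> \<sigma>}. f G)
      = (\<Sum>G\<in>faces K i. \<Sum>\<sigma>\<in>common_cofaces K i F G. f G)"
    using finite_faces sum.swap_restrict[of "{\<sigma>\<in>faces K (i + 1). F \<subseteq> \<sigma>}" "faces K i" "\<lambda>\<sigma> G. f G" "\<lambda>\<sigma> G. G \<subseteq> \<sigma>"]
    by (simp add: common_cofaces_def conj_ac)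
  then show ?thesis
    using signless_up_laplacian_eq_kernel[OF F] by simp
qed

lemma is_eigenvalue_Qup_iff_kernel_eigenvalue:
  "is_eigenvalue_Qup K i \<mu>
    \<longleftrightarrow> kernel_eigenvalue (faces K i) (\<lambda>F G. real (card (common_cofaces K i F G))) \<mu>"
proof -
  have "signless_up_laplacian K i f = (\<lambda>F. \<mu> * f F)
      \<longleftrightarrow> (\<forall>F\<in>faces K i. (\<Sum>G\<in>faces K i. real (card (common_cofaces K i F G)) * f G) = \<mu> * f F)"
    if "f \<in> chains K i" for f
    using that signless_up_laplacian_eq_kernel
    by (auto simp: fun_eq_iff chains_def signless_up_laplacian_def)
  then show ?thesis
    unfolding is_eigenvalue_Qup_def kernel_eigenvalue_def chains_def by auto
qed

lemma Qup_eigenvalues_finite_nonempty: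
  assumes "faces K i \<noteq> {}"
  shows "finite {\<mu>. is_eigenvalue_Qup K i \<mu>}" "{\<mu>. is_eigenvalue_Qup K i \<mu>} \<noteq> {}"
proof -
  have sym: "real (card (common_cofaces K i G F)) = real (card (common_cofaces K i F G))" for F G
    by (simp add: common_cofaces_def Un_commute)
  show "finite {\<mu>. is_eigenvalue_Qup K i \<mu>}" "{\<mu>. is_eigenvalue_Qup K i \<mu>} \<noteq> {}"
    using symmetric_kernel_eigenvalues[where k = "\<lambda>F G. real (card (common_cofaces K i F G))",
        OF finite_faces assms sym]
    by (simp_all add: is_eigenvalue_Qup_iff_kernel_eigenvalue)
qed

end

section \<open>Incidence signs and formal boundaries\<close>

lemma sets_between_eq_pair:
  assumes "finite S" "G \<subseteq> S" "S - G = {a, b}"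
  shows "{F. G \<subseteq> F \<and> F \<subseteq> S \<and> card F = card G + 1} = {insert a G, insert b G}"
proof (rule Set.set_eqI, rule iffI)
  fix F assume F: "F \<in> {F. G \<subseteq> F \<and> F \<subseteq> S \<and> card F = card G + 1}"
  then have "finite F" using assms(1) finite_subset by blast
  then obtain x where "x \<in> F" "G = F - {x}"
    using subset_card_Suc_removeE[of F G] F by auto
  then show "F \<in> {insert a G, insert b G}" using F assms(3) by auto
next
  fix F assume "F \<in> {insert a G, insert b G}"
  moreover have "finite G" using finite_subset[OF assms(2,1)] .
  moreover have "a \<notin> G" "b \<notin> G" "a \<in> S" "b \<in> S" using assms(3) by auto
  ultimately show "F \<in> {F. G \<subseteq> F \<and> F \<subseteq> S \<and> card F = card G + 1}"
    using assms(2) by auto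
qed

lemma incidence_sign_square: "incidence_sign S F * incidence_sign S F = 1"
  unfolding incidence_sign_def by (simp add: power_mult_distrib[symmetric])

lemma incidence_sign_nonzero: "incidence_sign S F \<noteq> 0"
  unfolding incidence_sign_def by simp

lemma incidence_sign_insert:
  assumes "a \<notin> G"
  shows "incidence_sign (insert a G) G = (-1) ^ card {w\<in>G. w < a}"
proof -
  have "(THE v. v \<in> insert a G - G) = a" using assms by auto
  moreover have "{w \<in> insert a G. w < a} = {w\<in>G. w < a}" by auto
  ultimately show ?thesis unfolding incidence_sign_def by simp
qed

lemma incidence_sign_remove:
  assumes "b \<in> S"
  shows "incidence_sign S (S - {b}) = (-1) ^ card {w\<in>S. w < b}"
proof -
  have "(THE v. v \<in> S - (S - {b})) = b" using assms by auto
  then show ?thesis unfolding incidence_sign_def by simp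
qed

text \<open>The two ways of climbing from G to S contribute opposite signs: this is \<open>\<partial>\<partial> = 0\<close>.\<close>
lemma incidence_signs_cancel:
  fixes S G :: "'a::linorder set"
  assumes "finite S" "card S = card G + 2"
  shows "(\<Sum>F\<in>{F. G \<subseteq> F \<and> F \<subseteq> S \<and> card F = card G + 1}.
            incidence_sign F G * incidence_sign S F) = 0"
proof (cases "G \<subseteq> S")
  case False
  then have "{F. G \<subseteq> F \<and> F \<subseteq> S \<and> card F = card G + 1} = {}" by auto
  then show ?thesis by (simp only: sum.empty)
next
  case True
  have fG: "finite G" using True assms(1) finite_subset by blast
  have "card (S - G) = 2" using True assms fG by (simp add: card_Diff_subset)
  then obtain x y where xy: "S - G = {x, y}" "x \<noteq> y" by (meson card_2_iff)
  obtain a b where ab: "S - G = {a, b}" and "a < b"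
  proof (cases "x < y")
    case True then show ?thesis using that xy(1) by blast
  next
    case False
    then have "y < x" using xy(2) by simp
    then show ?thesis using that[of y x] xy(1) by (simp add: insert_commute)
  qed
  have G: "a \<notin> G" "b \<notin> G" and S: "S = insert a (insert b G)"
    using ab True by auto
  note cofaces = sets_between_eq_pair[OF assms(1) True ab]
  have faces_of_S: "insert a G = S - {b}" "insert b G = S - {a}" using S G \<open>a < b\<close> by auto
  have "incidence_sign S (insert a G) = (-1) ^ card {w\<in>S. w < b}"
    unfolding faces_of_S by (rule incidence_sign_remove) (simp add: S)
  also have "{w\<in>S. w < b} = insert a {w\<in>G. w < b}"
    using S \<open>a < b\<close> by auto
  finally have sign_a: "incidence_sign S (insert a G) = - ((-1) ^ card {w\<in>G. w < b})"
    using G fG by simp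
  have "incidence_sign S (insert b G) = (-1) ^ card {w\<in>S. w < a}"
    unfolding faces_of_S by (rule incidence_sign_remove) (simp add: S)
  also have "{w\<in>S. w < a} = {w\<in>G. w < a}"
    using S \<open>a < b\<close> by auto
  finally have sign_b: "incidence_sign S (insert b G) = (-1) ^ card {w\<in>G. w < a}" .
  have "insert a G \<noteq> insert b G" using G \<open>a < b\<close> by auto
  then show ?thesis
    unfolding cofaces
    by (simp add: sign_a sign_b incidence_sign_insert[OF G(1)] incidence_sign_insert[OF G(2)])
qed

definition formal_boundary :: "'a::linorder set set \<Rightarrow> ('a set \<Rightarrow> real) \<Rightarrow> 'a set \<Rightarrow> real" where
  "formal_boundary Ss c F =
    (\<Sum>S\<in>Ss. if F \<subseteq> S \<and> card S = Suc (card F) then incidence_sign S F * c S else 0)"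

lemma formal_boundary_nonzeroD:
  assumes "formal_boundary Ss c F \<noteq> 0"
  obtains S where "S \<in> Ss" "F \<subseteq> S" "card S = Suc (card F)"
proof -
  have "\<exists>S\<in>Ss. F \<subseteq> S \<and> card S = Suc (card F)"
  proof (rule ccontr)
    assume "\<not> ?thesis"
    then have "formal_boundary Ss c F = 0" unfolding formal_boundary_def by (intro sum.neutral) auto
    then show False using assms by contradiction
  qed
  then show ?thesis using that by blast
qed

lemma sum_incidence_sign_formal_boundary:
  fixes G :: "'a::linorder set"
  assumes "finite Ss" and Ss: "\<And>S. S \<in> Ss \<Longrightarrow> finite S \<and> card S = card G + 2"
  shows "(\<Sum>F\<in>{F. G \<subseteq> F \<and> card F = card G + 1 \<and> (\<exists>S\<in>Ss. F \<subseteq> S)}.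
      incidence_sign F G * formal_boundary Ss c F) = 0"
proof -
  define B where "B = {F. G \<subseteq> F \<and> card F = card G + 1 \<and> (\<exists>S\<in>Ss. F \<subseteq> S)}"
  have "finite B"
    by (rule finite_subset[of _ "\<Union>S\<in>Ss. Pow S"]) (use assms in \<open>auto simp: B_def\<close>)
  have "(\<Sum>F\<in>B. incidence_sign F G * formal_boundary Ss c F) = (\<Sum>F\<in>B. \<Sum>S\<in>Ss.
      if F \<subseteq> S \<and> card S = Suc (card F) then c S * (incidence_sign F G * incidence_sign S F) else 0)"
    unfolding formal_boundary_def sum_distrib_left by (intro sum.cong refl) simp
  also have "\<dots> = (\<Sum>S\<in>Ss. \<Sum>F\<in>B.
      if F \<subseteq> S \<and> card S = Suc (card F) then c S * (incidence_sign F G * incidence_sign S F) else 0)"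
    by (rule sum.swap)
  also have "\<dots> = (\<Sum>S\<in>Ss. c S *
      (\<Sum>F\<in>{F\<in>B. F \<subseteq> S \<and> card S = Suc (card F)}. incidence_sign F G * incidence_sign S F))"
    using \<open>finite B\<close> by (simp add: sum.inter_filter sum_distrib_left) (intro sum.cong refl; simp)
  also have "\<dots> = 0"
  proof (intro sum.neutral ballI)
    fix S assume "S \<in> Ss"
    then have "{F\<in>B. F \<subseteq> S \<and> card S = Suc (card F)} = {F. G \<subseteq> F \<and> F \<subseteq> S \<and> card F = card G + 1}"
      using Ss unfolding B_def by auto
    then show "c S * (\<Sum>F\<in>{F\<in>B. F \<subseteq> S \<and> card S = Suc (card F)}.
        incidence_sign F G * incidence_sign S F) = 0"
      using incidence_signs_cancel[of S G] Ss[OF \<open>S \<in> Ss\<close>] by simp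
  qed
  finally show ?thesis unfolding B_def .
qed

lemma boundary_formal_boundary:
  fixes Ss :: "'a::linorder set set"
  assumes "finite (faces K i)" "1 \<le> i" "finite Ss"
    and Ss: "\<And>S. S \<in> Ss \<Longrightarrow> finite S \<and> card S = i + 2"
    and supp: "\<And>F. formal_boundary Ss c F \<noteq> 0 \<Longrightarrow> F \<in> K"
  shows "boundary K i (formal_boundary Ss c) = (\<lambda>_. 0)"
proof
  fix G
  let ?z = "formal_boundary Ss c"
  show "boundary K i ?z G = 0"
  proof (cases "G \<in> faces K (i - 1)")
    case False then show ?thesis by (simp add: boundary_def)
  next
    case True
    then have cG: "card G = i" using \<open>1 \<le> i\<close> unfolding faces_def by auto
    let ?A = "{F \<in> faces K i. G \<subseteq> F}" and ?g = "\<lambda>F. incidence_sign F G * ?z F"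
    define B where "B = {F. G \<subseteq> F \<and> card F = card G + 1 \<and> (\<exists>S\<in>Ss. F \<subseteq> S)}"
    have "finite ?A" using assms(1) by simp
    have "finite B"
      by (rule finite_subset[of _ "\<Union>S\<in>Ss. Pow S"]) (use assms in \<open>auto simp: B_def\<close>)
    have support: "F \<in> faces K i \<and> (\<exists>S\<in>Ss. F \<subseteq> S)" if nz: "?z F \<noteq> 0" for F
    proof -
      obtain S where "S \<in> Ss" "F \<subseteq> S" "card S = Suc (card F)"
        using formal_boundary_nonzeroD[OF nz] .
      then show ?thesis using Ss[of S] supp[OF nz] unfolding faces_def by auto
    qed
    have zero_outside_B: "?z F = 0" if "G \<subseteq> F" "F \<notin> B" for F
    proof (rule ccontr)
      assume "?z F \<noteq> 0"
      then have "F \<in> B" using support that(1) cG unfolding B_def faces_def by simp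
      then show False using that(2) by contradiction
    qed
    have zero_outside_A: "?z F = 0" if "F \<notin> faces K i" for F
      using support[of F] that by blast
    have "sum ?g ?A = sum ?g B"
      using \<open>finite ?A\<close> \<open>finite B\<close> zero_outside_A zero_outside_B unfolding B_def
      by (intro sum.mono_neutral_cong) auto
    also have "\<dots> = 0"
    proof -
      have "finite S \<and> card S = card G + 2" if "S \<in> Ss" for S using Ss[OF that] cG by simp
      then show ?thesis unfolding B_def by (rule sum_incidence_sign_formal_boundary[OF assms(3)])
    qed
    finally show ?thesis using True by (simp add: boundary_def)
  qed
qed

interpretation fscale: vector_space "fscale :: real \<Rightarrow> ('a set \<Rightarrow> real) \<Rightarrow> 'a set \<Rightarrow> real"
  by unfold_locales (auto simp: fscale_def fun_eq_iff algebra_simps)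

lemma (in vector_space) dim_eq_0_imp_subset_zero:
  assumes "S \<subseteq> span T" "finite T" "dim S = 0"
  shows "S \<subseteq> {0}"
proof -
  obtain B where B: "B \<subseteq> S" "independent B" "S \<subseteq> span B" "card B = dim S"
    using basis_exists by blast
  then have "finite B" using independent_span_bound[OF assms(2)] assms(1) by blast
  then have "B = {}" using B(4) assms(3) by simp
  then show ?thesis using B(3) by simp
qed

lemma sum_apply: "(\<Sum>a\<in>A. f a) x = (\<Sum>a\<in>A. f a x)"
  by (induction A rule: infinite_finite_induct) auto

lemma chains_subset_span_indicators:
  assumes "finite (faces K i)"
  shows "chains K i \<subseteq> fscale.span ((\<lambda>F G. if G = F then 1 else 0) ` faces K i)"
proof
  fix f assume f: "f \<in> chains K i"
  have "f = (\<Sum>F\<in>faces K i. fscale (f F) (\<lambda>G. if G = F then 1 else 0))"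
    using f assms by (auto simp: fun_eq_iff fscale_def chains_def sum_apply if_distrib cong: if_cong)
  also have "\<dots> \<in> fscale.span ((\<lambda>F G. if G = F then 1 else 0) ` faces K i)"
    by (intro fscale.span_sum fscale.span_scale fscale.span_base) auto
  finally show "f \<in> fscale.span ((\<lambda>F G. if G = F then 1 else 0) ` faces K i)" .
qed

section \<open>Cone complexes\<close>

definition cone_complex :: "'b set \<Rightarrow> nat \<Rightarrow> 'b \<Rightarrow> 'b set set" where
  "cone_complex W r c = {G. \<exists>T. T \<subseteq> W \<and> card T = r + 1 \<and> c \<in> T \<and> G \<subseteq> T}"

lemma tented_eq_cone_complex:
  assumes "1 \<le> n" shows "tented n r = cone_complex {1..n} r n"
proof (rule Set.set_eqI, rule iffI)
  fix G assume "G \<in> tented n r"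
  then obtain F where F: "F \<subseteq> {1..n - 1}" "card F = r" "G \<subseteq> insert n F"
    unfolding tented_def by blast
  moreover have "finite F" using finite_subset[OF F(1)] by simp
  moreover have "n \<notin> F" "insert n F \<subseteq> {1..n}" using F(1) assms by (auto simp: subset_iff)
  ultimately show "G \<in> cone_complex {1..n} r n"
    unfolding cone_complex_def by (intro CollectI exI[of _ "insert n F"]) auto
next
  fix G assume "G \<in> cone_complex {1..n} r n"
  then obtain T where T: "T \<subseteq> {1..n}" "card T = r + 1" "n \<in> T" "G \<subseteq> T"
    unfolding cone_complex_def by blast
  then have "T - {n} \<subseteq> {1..n - 1}" "card (T - {n}) = r" "G \<subseteq> insert n (T - {n})"
    using finite_subset[OF T(1)] by auto
  then show "G \<in> tented n r" unfolding tented_def by blast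
qed

lemma image_cone_complex:
  assumes inj: "inj_on \<phi> W" and "c \<in> W"
  shows "(\<lambda>G. \<phi> ` G) ` cone_complex W r c = cone_complex (\<phi> ` W) r (\<phi> c)"
proof (rule Set.set_eqI, rule iffI)
  fix G' assume "G' \<in> (\<lambda>G. \<phi> ` G) ` cone_complex W r c"
  then obtain G T where G': "G' = \<phi> ` G" and T: "T \<subseteq> W" "card T = r + 1" "c \<in> T" "G \<subseteq> T"
    unfolding cone_complex_def by blast
  have "card (\<phi> ` T) = card T" using inj_on_subset[OF inj T(1)] by (rule card_image)
  moreover have "\<phi> ` T \<subseteq> \<phi> ` W" "\<phi> c \<in> \<phi> ` T" "G' \<subseteq> \<phi> ` T"
    using T G' by (simp_all add: image_mono)
  ultimately show "G' \<in> cone_complex (\<phi> ` W) r (\<phi> c)"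
    unfolding cone_complex_def using T(2) by auto
next
  fix G' assume "G' \<in> cone_complex (\<phi> ` W) r (\<phi> c)"
  then obtain T' where T': "T' \<subseteq> \<phi> ` W" "card T' = r + 1" "\<phi> c \<in> T'" "G' \<subseteq> T'"
    unfolding cone_complex_def by blast
  define T where "T = {x \<in> W. \<phi> x \<in> T'}"
  define G where "G = {x \<in> T. \<phi> x \<in> G'}"
  have "T \<subseteq> W" "c \<in> T" "G \<subseteq> T" unfolding T_def G_def using T'(3) \<open>c \<in> W\<close> by auto
  have "\<phi> ` T = T'" unfolding T_def using T'(1) by auto
  have "\<phi> ` G = G'" unfolding G_def T_def using T'(1,4) by auto
  have "card T = r + 1"
    using card_image[OF inj_on_subset[OF inj \<open>T \<subseteq> W\<close>]] \<open>\<phi> ` T = T'\<close> T'(2) by simp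
  then have "G \<in> cone_complex W r c"
    unfolding cone_complex_def using \<open>T \<subseteq> W\<close> \<open>c \<in> T\<close> \<open>G \<subseteq> T\<close> by blast
  then show "G' \<in> (\<lambda>G. \<phi> ` G) ` cone_complex W r c" using \<open>\<phi> ` G = G'\<close> by blast
qed

lemma bij_betw_atLeastAtMost_last:
  assumes "finite V" "c \<in> V" "card V = n"
  obtains \<phi> where "bij_betw \<phi> V {1..n}" "\<phi> c = n"
proof -
  have "0 < card V" using assms(1,2) card_gt_0_iff by blast
  then have "1 \<le> n" using assms(3) by simp
  obtain g where g: "bij_betw g (V - {c}) {1..n - 1}"
    using finite_same_card_bij[of "V - {c}" "{1..n - 1}"] assms by auto
  define \<phi> where "\<phi> x = (if x \<in> V - {c} then g x else n)" for x
  have "bij_betw \<phi> ((V - {c}) \<union> {c}) ({1..n - 1} \<union> {n})"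
    unfolding \<phi>_def using g \<open>1 \<le> n\<close> by (intro bij_betw_disjoint_Un) auto
  moreover have "(V - {c}) \<union> {c} = V" "{1..n - 1} \<union> {n} = {1..n}" using assms(2) \<open>1 \<le> n\<close> by auto
  moreover have "\<phi> c = n" by (simp add: \<phi>_def)
  ultimately show ?thesis using that by simp
qed

lemma faces_cone_complex:
  assumes "finite W"
  shows "faces (cone_complex W r c) r = {T. T \<subseteq> W \<and> card T = r + 1 \<and> c \<in> T}"
proof (rule Set.set_eqI, rule iffI)
  fix G assume "G \<in> faces (cone_complex W r c) r"
  then obtain T where T: "T \<subseteq> W" "card T = r + 1" "c \<in> T" "G \<subseteq> T" "card G = r + 1"
    unfolding faces_def cone_complex_def by blast
  then have "G = T" using card_subset_eq[OF finite_subset[OF T(1) assms] T(4)] by simp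
  then show "G \<in> {T. T \<subseteq> W \<and> card T = r + 1 \<and> c \<in> T}" using T by blast
next
  fix T assume "T \<in> {T. T \<subseteq> W \<and> card T = r + 1 \<and> c \<in> T}"
  then show "T \<in> faces (cone_complex W r c) r" unfolding faces_def cone_complex_def by blast
qed

section \<open>Weights of top faces\<close>

locale pure_complex = finite_complex V K for V :: "'a::linorder set" and K +
  fixes r :: nat
  assumes pure: "pure_dim K r" and r_pos: "1 \<le> r"
begin

lemma face_subset_top_face:
  assumes "F \<in> K" obtains \<sigma> where "\<sigma> \<in> faces K r" "F \<subseteq> \<sigma>"
proof -
  have "finite {G\<in>K. F \<subseteq> G}" using finite_K by simp
  then obtain \<sigma> where \<sigma>: "\<sigma> \<in> K" "F \<subseteq> \<sigma>" "\<forall>G\<in>{G\<in>K. F \<subseteq> G}. \<sigma> \<subseteq> G \<longrightarrow> \<sigma> = G"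
    using finite_has_maximal2[of "{G\<in>K. F \<subseteq> G}" F] assms by auto
  then have "\<sigma> \<in> facets K" unfolding facets_def by auto
  then have "\<sigma> \<in> faces K r" using pure \<sigma>(1) unfolding pure_dim_def faces_def by auto
  then show ?thesis using that \<sigma>(2) by blast
qed

lemma faces_above_top_empty: "faces K (r + 1) = {}"
proof -
  have "card F \<le> r + 1" if F: "F \<in> K" for F
  proof -
    obtain \<sigma> where "\<sigma> \<in> faces K r" "F \<subseteq> \<sigma>" using face_subset_top_face[OF F] .
    then show ?thesis using faceD[of \<sigma> r] card_mono[of \<sigma> F] by simp
  qed
  then show ?thesis unfolding faces_def by fastforce
qed

lemma top_faces_nonempty: "faces K r \<noteq> {}"
proof -
  obtain F where "F \<in> K" using pure unfolding pure_dim_def by auto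
  then show ?thesis using face_subset_top_face by blast
qed

lemma card_V_ge: "r + 1 \<le> card V"
proof -
  obtain \<sigma> where "\<sigma> \<in> faces K r" using top_faces_nonempty by blast
  then show ?thesis using faceD[of \<sigma> r] card_mono[OF finite_V, of \<sigma>] by simp
qed

definition ridges :: "'a set \<Rightarrow> 'a set set" where
  "ridges \<sigma> = {F \<in> faces K (r - 1). F \<subseteq> \<sigma>}"

definition top_cofaces :: "'a set \<Rightarrow> 'a set set" where
  "top_cofaces F = {\<tau> \<in> faces K r. F \<subseteq> \<tau>}"

definition weight :: "'a set \<Rightarrow> nat" where
  "weight \<sigma> = (\<Sum>F\<in>ridges \<sigma>. card (top_cofaces F))"

definition exchange_count :: "'a set \<Rightarrow> 'a \<Rightarrow> nat" where
  "exchange_count \<sigma> w = card {v \<in> \<sigma>. insert w (\<sigma> - {v}) \<in> K}"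

definition tent_bound :: nat where
  "tent_bound = r * (card V - r) + 1"

lemma finite_ridges: "finite (ridges \<sigma>)"
  unfolding ridges_def using finite_faces by simp

lemma finite_top_cofaces: "finite (top_cofaces F)"
  unfolding top_cofaces_def using finite_faces by simp

lemma ridges_eq:
  assumes \<sigma>: "\<sigma> \<in> faces K r"
  shows "ridges \<sigma> = (\<lambda>v. \<sigma> - {v}) ` \<sigma>"
proof (rule Set.set_eqI, rule iffI)
  fix F assume "F \<in> ridges \<sigma>"
  then have "F \<subseteq> \<sigma>" "card \<sigma> = Suc (card F)"
    using faceD[OF \<sigma>] r_pos unfolding ridges_def faces_def by auto
  then obtain v where "v \<in> \<sigma>" "F = \<sigma> - {v}"
    using subset_card_Suc_removeE faceD(2)[OF \<sigma>] by blast
  then show "F \<in> (\<lambda>v. \<sigma> - {v}) ` \<sigma>" by blast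
next
  fix F assume "F \<in> (\<lambda>v. \<sigma> - {v}) ` \<sigma>"
  then obtain v where v: "v \<in> \<sigma>" "F = \<sigma> - {v}" by blast
  then have "F \<in> K" using face_subset_closed faceD(1)[OF \<sigma>] by blast
  moreover have "card F = r - 1 + 1" using v faceD[OF \<sigma>] r_pos by simp
  ultimately show "F \<in> ridges \<sigma>" using v unfolding ridges_def faces_def by blast
qed

lemma remove_vertex_ridge:
  assumes "\<sigma> \<in> faces K r" "v \<in> \<sigma>" shows "\<sigma> - {v} \<in> ridges \<sigma>"
  using ridges_eq[OF assms(1)] assms(2) by blast

lemma top_face_vertexE:
  obtains \<sigma> v where "\<sigma> \<in> faces K r" "v \<in> \<sigma>"
proof -
  obtain \<sigma> where \<sigma>: "\<sigma> \<in> faces K r" using top_faces_nonempty by blast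
  have "\<sigma> \<noteq> {}" using faceD(3)[OF \<sigma>] by auto
  then show ?thesis using that \<sigma> by blast
qed

lemma card_top_cofaces_remove:
  assumes \<sigma>: "\<sigma> \<in> faces K r" and v: "v \<in> \<sigma>"
  shows "card (top_cofaces (\<sigma> - {v})) = Suc (card {w \<in> V - \<sigma>. insert w (\<sigma> - {v}) \<in> K})"
proof -
  let ?W = "{w \<in> V - \<sigma>. insert w (\<sigma> - {v}) \<in> K}"
  have fin: "finite \<sigma>" and card: "card \<sigma> = r + 1" using faceD[OF \<sigma>] by auto
  have "top_cofaces (\<sigma> - {v}) = insert \<sigma> ((\<lambda>w. insert w (\<sigma> - {v})) ` ?W)"
  proof (rule Set.set_eqI, rule iffI)
    fix \<tau> assume "\<tau> \<in> top_cofaces (\<sigma> - {v})"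
    then have \<tau>: "\<tau> \<in> faces K r" "\<sigma> - {v} \<subseteq> \<tau>" unfolding top_cofaces_def by auto
    then have "card \<tau> = Suc (card (\<sigma> - {v}))" using faceD[OF \<tau>(1)] fin card v by simp
    then obtain w where w: "w \<in> \<tau>" "\<sigma> - {v} = \<tau> - {w}"
      using subset_card_Suc_removeE[OF faceD(2)[OF \<tau>(1)] \<tau>(2)] by blast
    then have \<tau>_eq: "\<tau> = insert w (\<sigma> - {v})" by blast
    show "\<tau> \<in> insert \<sigma> ((\<lambda>w. insert w (\<sigma> - {v})) ` ?W)"
    proof (cases "w \<in> \<sigma>")
      case True
      then have "w = v" using w by blast
      then show ?thesis using \<tau>_eq v by auto
    next
      case False
      then show ?thesis using \<tau>_eq faceD[OF \<tau>(1)] by auto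
    qed
  next
    fix \<tau> assume "\<tau> \<in> insert \<sigma> ((\<lambda>w. insert w (\<sigma> - {v})) ` ?W)"
    then show "\<tau> \<in> top_cofaces (\<sigma> - {v})"
      using \<sigma> fin card v unfolding top_cofaces_def faces_def by auto
  qed
  moreover have "inj_on (\<lambda>w. insert w (\<sigma> - {v})) ?W"
    by (rule inj_onI) (auto simp: insert_ident)
  moreover have "\<sigma> \<notin> (\<lambda>w. insert w (\<sigma> - {v})) ` ?W" using v by auto
  moreover have "finite ?W" using finite_V by simp
  ultimately show ?thesis by (simp add: card_image)
qed

lemma weight_eq:
  assumes \<sigma>: "\<sigma> \<in> faces K r"
  shows "weight \<sigma> = (r + 1) + (\<Sum>w\<in>V - \<sigma>. exchange_count \<sigma> w)"
proof -
  have fin: "finite \<sigma>" and card: "card \<sigma> = r + 1" using faceD[OF \<sigma>] by auto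
  have "inj_on (\<lambda>v. \<sigma> - {v}) \<sigma>" by (rule inj_onI) auto
  then have "weight \<sigma> = (\<Sum>v\<in>\<sigma>. card (top_cofaces (\<sigma> - {v})))"
    unfolding weight_def ridges_eq[OF \<sigma>] by (simp add: sum.reindex)
  also have "\<dots> = (\<Sum>v\<in>\<sigma>. 1 + (\<Sum>w\<in>V - \<sigma>. of_bool (insert w (\<sigma> - {v}) \<in> K)))"
    using finite_V by (intro sum.cong refl) (simp add: card_top_cofaces_remove[OF \<sigma>] Int_def)
  also have "\<dots> = card \<sigma> + (\<Sum>v\<in>\<sigma>. \<Sum>w\<in>V - \<sigma>. of_bool (insert w (\<sigma> - {v}) \<in> K))"
    by (simp only: sum.distrib) simp
  also have "\<dots> = (r + 1) + (\<Sum>w\<in>V - \<sigma>. \<Sum>v\<in>\<sigma>. of_bool (insert w (\<sigma> - {v}) \<in> K))"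
    by (subst sum.swap) (simp only: card)
  also have "\<dots> = (r + 1) + (\<Sum>w\<in>V - \<sigma>. exchange_count \<sigma> w)"
    using fin unfolding exchange_count_def by (simp add: Int_def)
  finally show ?thesis .
qed

lemma tent_bound_eq: "(r + 1) + (card V - (r + 1)) * r = tent_bound"
proof -
  obtain m where "card V = r + 1 + m" using card_V_ge le_iff_add by blast
  then show ?thesis unfolding tent_bound_def by (simp add: algebra_simps)
qed

lemma signless_up_laplacian_ridge:
  assumes "F \<in> faces K (r - 1)"
  shows "signless_up_laplacian K (r - 1) f F = (\<Sum>\<tau>\<in>top_cofaces F. \<Sum>G\<in>ridges \<tau>. f G)"
  using signless_up_laplacian_eq_coface_sum[OF assms, of f] r_pos
  unfolding top_cofaces_def ridges_def by simp

definition ridge_sum :: "('a set \<Rightarrow> real) \<Rightarrow> 'a set \<Rightarrow> real" where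
  "ridge_sum x \<sigma> = (\<Sum>F\<in>ridges \<sigma>. x F)"

lemma eigenvector_ridge_eq:
  assumes "signless_up_laplacian K (r - 1) x = (\<lambda>F. \<mu> * x F)" "F \<in> faces K (r - 1)"
  shows "\<mu> * x F = (\<Sum>\<tau>\<in>top_cofaces F. ridge_sum x \<tau>)"
  using signless_up_laplacian_ridge[OF assms(2), of x] assms(1)
  unfolding ridge_sum_def by (simp add: fun_eq_iff)

lemma eigenvector_ridge_sum_eq:
  assumes "signless_up_laplacian K (r - 1) x = (\<lambda>F. \<mu> * x F)"
  shows "\<mu> * ridge_sum x \<sigma> = (\<Sum>F\<in>ridges \<sigma>. \<Sum>\<tau>\<in>top_cofaces F. ridge_sum x \<tau>)"
proof -
  have "\<mu> * ridge_sum x \<sigma> = (\<Sum>F\<in>ridges \<sigma>. \<mu> * x F)"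
    unfolding ridge_sum_def by (simp add: sum_distrib_left)
  also have "\<dots> = (\<Sum>F\<in>ridges \<sigma>. \<Sum>\<tau>\<in>top_cofaces F. ridge_sum x \<tau>)"
    using eigenvector_ridge_eq[OF assms] by (intro sum.cong refl) (simp add: ridges_def)
  finally show ?thesis .
qed

text \<open>In the equality case, the top faces where the ridge sum of an eigenvector has maximal
  modulus form a saturated family.\<close>
definition saturated :: "'a set set \<Rightarrow> bool" where
  "saturated S \<longleftrightarrow> S \<subseteq> faces K r
     \<and> (\<forall>\<sigma>\<in>S. weight \<sigma> = tent_bound \<and> (\<forall>F\<in>ridges \<sigma>. top_cofaces F \<subseteq> S))"

lemma ridge_faces_nonempty: "faces K (r - 1) \<noteq> {}"
proof -
  obtain \<sigma> v where "\<sigma> \<in> faces K r" "v \<in> \<sigma>" by (rule top_face_vertexE)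
  then have "\<sigma> - {v} \<in> ridges \<sigma>" by (rule remove_vertex_ridge)
  then show ?thesis unfolding ridges_def by blast
qed

lemma eq_cone_complex_iff:
  "K = cone_complex V r c \<longleftrightarrow> faces K r = {T. T \<subseteq> V \<and> card T = r + 1 \<and> c \<in> T}"
proof
  assume "K = cone_complex V r c"
  then show "faces K r = {T. T \<subseteq> V \<and> card T = r + 1 \<and> c \<in> T}"
    using faces_cone_complex[OF finite_V] by simp
next
  assume top: "faces K r = {T. T \<subseteq> V \<and> card T = r + 1 \<and> c \<in> T}"
  show "K = cone_complex V r c"
  proof (rule Set.set_eqI, rule iffI)
    fix F assume "F \<in> K"
    then obtain \<sigma> where "\<sigma> \<in> faces K r" "F \<subseteq> \<sigma>" by (rule face_subset_top_face)
    then show "F \<in> cone_complex V r c" using top unfolding cone_complex_def by blast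
  next
    fix F assume "F \<in> cone_complex V r c"
    then obtain T where "T \<in> faces K r" "F \<subseteq> T" using top unfolding cone_complex_def by blast
    then show "F \<in> K" using faceD(1) face_subset_closed by blast
  qed
qed

lemma iso_tented_iff_cone:
  assumes "card V = n"
  shows "complex_iso V K {1..n} (tented n r) \<longleftrightarrow> (\<exists>c. K = cone_complex V r c)"
proof
  assume "complex_iso V K {1..n} (tented n r)"
  then obtain \<phi> where \<phi>: "bij_betw \<phi> V {1..n}" and img: "(\<lambda>F. \<phi> ` F) ` K = tented n r"
    unfolding complex_iso_def by blast
  define \<psi> where "\<psi> = the_inv_into V \<phi>"
  have \<psi>: "bij_betw \<psi> {1..n} V" unfolding \<psi>_def using \<phi> by (rule bij_betw_the_inv_into)
  have "1 \<le> n" using card_V_ge assms by simp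
  have "\<psi> ` \<phi> ` F = F" if "F \<in> K" for F
    using face_subset_V[OF that] \<phi> unfolding \<psi>_def bij_betw_def
    by (auto simp: image_image the_inv_into_f_f subset_iff)
  then have "K = (\<lambda>G. \<psi> ` G) ` (\<lambda>F. \<phi> ` F) ` K"
    by (simp add: image_image cong: image_cong)
  also have "\<dots> = (\<lambda>G. \<psi> ` G) ` cone_complex {1..n} r n"
    unfolding img tented_eq_cone_complex[OF \<open>1 \<le> n\<close>] ..
  also have "\<dots> = cone_complex V r (\<psi> n)"
    using image_cone_complex[of \<psi> "{1..n}" n r] \<psi> \<open>1 \<le> n\<close> by (simp add: bij_betw_def)
  finally show "\<exists>c. K = cone_complex V r c" by auto
next
  assume "\<exists>c. K = cone_complex V r c"
  then obtain c where c: "K = cone_complex V r c" by blast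
  have "c \<in> V"
    using top_faces_nonempty eq_cone_complex_iff[THEN iffD1, OF c] by blast
  have "1 \<le> n" using card_V_ge assms by simp
  obtain \<phi> where \<phi>: "bij_betw \<phi> V {1..n}" "\<phi> c = n"
    using bij_betw_atLeastAtMost_last[OF finite_V \<open>c \<in> V\<close> assms] .
  have "(\<lambda>F. \<phi> ` F) ` K = cone_complex {1..n} r n"
    using image_cone_complex[of \<phi> V c r] \<phi> \<open>c \<in> V\<close> unfolding c by (simp add: bij_betw_def)
  then show "complex_iso V K {1..n} (tented n r)"
    unfolding complex_iso_def tented_eq_cone_complex[OF \<open>1 \<le> n\<close>] using \<phi> by blast
qed

lemma cone_weight:
  assumes top: "faces K r = {T. T \<subseteq> V \<and> card T = r + 1 \<and> c \<in> T}" and \<sigma>: "\<sigma> \<in> faces K r"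
  shows "weight \<sigma> = tent_bound"
proof -
  note \<sigma>_facts = faceD[OF \<sigma>]
  have "c \<in> \<sigma>" using \<sigma> by (simp add: top)
  have exchange: "insert w (\<sigma> - {v}) \<in> K \<longleftrightarrow> v \<noteq> c" if w: "w \<in> V - \<sigma>" and v: "v \<in> \<sigma>" for w v
  proof -
    have card: "card (insert w (\<sigma> - {v})) = r + 1" using \<sigma>_facts w v by simp
    have "insert w (\<sigma> - {v}) \<subseteq> V" using \<sigma>_facts w by auto
    have "insert w (\<sigma> - {v}) \<in> K \<longleftrightarrow> insert w (\<sigma> - {v}) \<in> faces K r"
      using card by (simp add: faces_def)
    also have "\<dots> \<longleftrightarrow> c \<in> insert w (\<sigma> - {v})"
      using card \<open>insert w (\<sigma> - {v}) \<subseteq> V\<close> by (simp add: top)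
    also have "\<dots> \<longleftrightarrow> v \<noteq> c" using \<open>c \<in> \<sigma>\<close> w by auto
    finally show ?thesis .
  qed
  have "exchange_count \<sigma> w = r" if "w \<in> V - \<sigma>" for w
  proof -
    have "{v \<in> \<sigma>. insert w (\<sigma> - {v}) \<in> K} = \<sigma> - {c}" using exchange[OF that] by blast
    then show ?thesis using \<sigma>_facts \<open>c \<in> \<sigma>\<close> unfolding exchange_count_def by simp
  qed
  then have "(\<Sum>w\<in>V - \<sigma>. exchange_count \<sigma> w) = card (V - \<sigma>) * r" by simp
  moreover have "card (V - \<sigma>) = card V - (r + 1)"
    using \<sigma>_facts finite_V by (simp add: card_Diff_subset)
  ultimately show ?thesis using weight_eq[OF \<sigma>] tent_bound_eq by simp
qed

lemma cone_Qup_eigenvalue: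
  assumes top: "faces K r = {T. T \<subseteq> V \<and> card T = r + 1 \<and> c \<in> T}"
  shows "is_eigenvalue_Qup K (r - 1) (real tent_bound)"
proof -
  define x where "x F = (if F \<in> faces K (r - 1) then real (card (top_cofaces F)) else 0)" for F
  have "signless_up_laplacian K (r - 1) x F = real tent_bound * x F" for F
  proof (cases "F \<in> faces K (r - 1)")
    case True
    have "signless_up_laplacian K (r - 1) x F = (\<Sum>\<tau>\<in>top_cofaces F. real (weight \<tau>))"
      unfolding signless_up_laplacian_ridge[OF True] weight_def of_nat_sum
      by (intro sum.cong refl) (simp add: x_def ridges_def)
    also have "\<dots> = (\<Sum>\<tau>\<in>top_cofaces F. real tent_bound)"
      using cone_weight[OF top] by (intro sum.cong refl) (simp add: top_cofaces_def)
    also have "\<dots> = real tent_bound * x F"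
      using True by (simp add: x_def)
    finally show ?thesis .
  qed (simp add: signless_up_laplacian_def x_def)
  moreover have "x \<in> chains K (r - 1)" unfolding chains_def x_def by simp
  moreover have "x \<noteq> (\<lambda>_. 0)"
  proof -
    obtain \<sigma> v where \<sigma>: "\<sigma> \<in> faces K r" "v \<in> \<sigma>" by (rule top_face_vertexE)
    then have "\<sigma> - {v} \<in> faces K (r - 1)" using remove_vertex_ridge unfolding ridges_def by blast
    then have "x (\<sigma> - {v}) \<noteq> 0"
      using card_top_cofaces_remove[OF \<sigma>] by (simp add: x_def)
    then show ?thesis by auto
  qed
  ultimately show ?thesis unfolding is_eigenvalue_Qup_def by blast
qed

end

section \<open>Vanishing top homology\<close>

locale top_acyclic_complex = pure_complex +
  assumes betti_top: "betti K r = 0"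
begin

lemma top_cycle_eq_0:
  assumes "z \<in> chains K r" "boundary K r z = (\<lambda>_. 0)"
  shows "z = (\<lambda>_. 0)"
proof -
  define Z where "Z = {f \<in> chains K r. boundary K r f = (\<lambda>_. 0)}"
  have "chains K (r + 1) = {\<lambda>_. 0}"
    unfolding chains_def faces_above_top_empty by auto
  then have image: "boundary K (r + 1) ` chains K (r + 1) = fscale.span {}"
    by (auto simp: boundary_def fun_eq_iff zero_fun_def)
  have "fscale.dim (fscale.span ({} :: ('a set \<Rightarrow> real) set)) = 0"
    unfolding fscale.dim_span using fscale.dim_eq_card_independent[OF fscale.independent_empty] by simp
  then have "fscale.dim Z = 0"
    using betti_top unfolding betti_def Z_def image by linarith
  moreover have "Z \<subseteq> fscale.span ((\<lambda>F G. if G = F then 1 else 0) ` faces K r)"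
    using chains_subset_span_indicators[OF finite_faces] unfolding Z_def by blast
  ultimately have "Z \<subseteq> {0}"
    using finite_faces by (intro fscale.dim_eq_0_imp_subset_zero) auto
  then show ?thesis using assms unfolding Z_def by (auto simp: zero_fun_def)
qed

lemma formal_boundary_eq_0:
  assumes "finite Ss" "\<And>S. S \<in> Ss \<Longrightarrow> finite S \<and> card S = r + 2"
    and "\<And>F. formal_boundary Ss c F \<noteq> 0 \<Longrightarrow> F \<in> K"
  shows "formal_boundary Ss c = (\<lambda>_. 0)"
proof (rule top_cycle_eq_0)
  show "formal_boundary Ss c \<in> chains K r"
    using assms unfolding chains_def faces_def formal_boundary_def
    by (fastforce intro: sum.neutral)
  show "boundary K r (formal_boundary Ss c) = (\<lambda>_. 0)"
    using assms finite_faces r_pos by (intro boundary_formal_boundary) auto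
qed

lemma no_hollow_simplex:
  assumes "finite T" "card T = r + 2"
  shows "\<exists>t\<in>T. T - {t} \<notin> K"
proof (rule ccontr)
  assume "\<not> ?thesis"
  then have all: "T - {t} \<in> K" if "t \<in> T" for t using that by blast
  have fb: "formal_boundary {T} (\<lambda>_. 1) F
      = (if F \<subseteq> T \<and> card T = Suc (card F) then incidence_sign T F else 0)" for F
    unfolding formal_boundary_def by simp
  have "formal_boundary {T} (\<lambda>_. 1) = (\<lambda>_. 0)"
  proof (rule formal_boundary_eq_0)
    fix F assume "formal_boundary {T} (\<lambda>_. 1) F \<noteq> 0"
    then have "F \<subseteq> T" "card T = Suc (card F)" unfolding fb by (auto split: if_splits)
    then obtain t where "t \<in> T" "F = T - {t}" using subset_card_Suc_removeE assms(1) by blast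
    then show "F \<in> K" using all by blast
  qed (use assms in auto)
  moreover obtain t where "t \<in> T" using assms by fastforce
  then have "formal_boundary {T} (\<lambda>_. 1) (T - {t}) \<noteq> 0"
    using assms unfolding fb by (simp add: incidence_sign_nonzero)
  ultimately show False by simp
qed

lemma no_hollow_simplex_pair:
  assumes fin: "finite S\<^sub>1" "finite S\<^sub>2" and card: "card S\<^sub>1 = r + 2" "card S\<^sub>2 = r + 2"
    and P: "S\<^sub>1 \<inter> S\<^sub>2 = P" "card P = r + 1"
  shows "\<exists>F. (F \<subseteq> S\<^sub>1 \<or> F \<subseteq> S\<^sub>2) \<and> card F = r + 1 \<and> F \<noteq> P \<and> F \<notin> K"
proof (rule ccontr)
  assume "\<not> ?thesis"
  then have all: "F \<in> K" if "F \<subseteq> S\<^sub>1 \<or> F \<subseteq> S\<^sub>2" "card F = r + 1" "F \<noteq> P" for F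
    using that by blast
  have "S\<^sub>1 \<noteq> S\<^sub>2" using P card by auto
  text \<open>Weights chosen so that the common face \<open>P\<close> cancels in the boundary.\<close>
  define c where "c S = (if S = S\<^sub>1 then 1 else - (incidence_sign S\<^sub>1 P * incidence_sign S\<^sub>2 P))" for S
  have fb: "formal_boundary {S\<^sub>1, S\<^sub>2} c F =
      (if F \<subseteq> S\<^sub>1 \<and> card F = r + 1 then incidence_sign S\<^sub>1 F else 0)
    + (if F \<subseteq> S\<^sub>2 \<and> card F = r + 1
       then - (incidence_sign S\<^sub>2 F * (incidence_sign S\<^sub>1 P * incidence_sign S\<^sub>2 P)) else 0)" for F
    unfolding formal_boundary_def c_def using \<open>S\<^sub>1 \<noteq> S\<^sub>2\<close> card by auto
  have "formal_boundary {S\<^sub>1, S\<^sub>2} c = (\<lambda>_. 0)"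
  proof (rule formal_boundary_eq_0)
    fix F assume nz: "formal_boundary {S\<^sub>1, S\<^sub>2} c F \<noteq> 0"
    then have "F \<subseteq> S\<^sub>1 \<or> F \<subseteq> S\<^sub>2" "card F = r + 1" unfolding fb by (auto split: if_splits)
    moreover have "F \<noteq> P"
    proof
      assume "F = P"
      then have "formal_boundary {S\<^sub>1, S\<^sub>2} c F
          = incidence_sign S\<^sub>1 P * (1 - incidence_sign S\<^sub>2 P * incidence_sign S\<^sub>2 P)"
        unfolding fb using P by (auto simp: algebra_simps)
      then show False using nz incidence_sign_square[of S\<^sub>2 P] by simp
    qed
    ultimately show "F \<in> K" by (rule all)
  qed (use fin card in auto)
  moreover obtain t where t: "t \<in> P" using P(2) by fastforce
  then have "t \<in> S\<^sub>1" using P(1) by blast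
  have "\<not> S\<^sub>1 - {t} \<subseteq> S\<^sub>2"
  proof
    assume "S\<^sub>1 - {t} \<subseteq> S\<^sub>2"
    then have "S\<^sub>1 - {t} \<subseteq> P" using P(1) by blast
    moreover have "card (S\<^sub>1 - {t}) = card P" using fin card P(2) \<open>t \<in> S\<^sub>1\<close> by simp
    moreover have "finite P" using fin(1) P(1) by blast
    ultimately have "S\<^sub>1 - {t} = P" by (simp add: card_subset_eq)
    then show False using t by blast
  qed
  then have "formal_boundary {S\<^sub>1, S\<^sub>2} c (S\<^sub>1 - {t}) = incidence_sign S\<^sub>1 (S\<^sub>1 - {t})"
    unfolding fb using fin card \<open>t \<in> S\<^sub>1\<close> by simp
  ultimately show False using incidence_sign_nonzero by metis
qed

lemma exchange_count_le:
  assumes \<sigma>: "\<sigma> \<in> faces K r" and w: "w \<in> V - \<sigma>"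
  shows "exchange_count \<sigma> w \<le> r"
proof (rule ccontr)
  assume gt: "\<not> exchange_count \<sigma> w \<le> r"
  have fin: "finite \<sigma>" and card: "card \<sigma> = r + 1" using faceD[OF \<sigma>] by auto
  have "{v \<in> \<sigma>. insert w (\<sigma> - {v}) \<in> K} = \<sigma>"
  proof (rule card_subset_eq[OF fin])
    show "card {v \<in> \<sigma>. insert w (\<sigma> - {v}) \<in> K} = card \<sigma>"
      using gt card card_mono[OF fin, of "{v \<in> \<sigma>. insert w (\<sigma> - {v}) \<in> K}"]
      unfolding exchange_count_def by auto
  qed auto
  then have "insert w \<sigma> - {t} \<in> K" if "t \<in> insert w \<sigma>" for t
    using that w faceD(1)[OF \<sigma>] by (cases "t = w") (auto simp: insert_Diff_if)
  moreover have "card (insert w \<sigma>) = r + 2" using fin card w by simp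
  ultimately show False using no_hollow_simplex[of "insert w \<sigma>"] fin by blast
qed

lemma weight_le:
  assumes \<sigma>: "\<sigma> \<in> faces K r"
  shows "weight \<sigma> \<le> tent_bound"
proof -
  have "card (V - \<sigma>) = card V - (r + 1)"
    using faceD[OF \<sigma>] finite_V by (simp add: card_Diff_subset)
  moreover have "(\<Sum>w\<in>V - \<sigma>. exchange_count \<sigma> w) \<le> (\<Sum>w\<in>V - \<sigma>. r)"
    using exchange_count_le[OF \<sigma>] by (intro sum_mono) blast
  ultimately show ?thesis
    using weight_eq[OF \<sigma>] tent_bound_eq by (simp add: mult.commute)
qed

lemma ridge_sum_max_modulus:
  assumes eig: "signless_up_laplacian K (r - 1) x = (\<lambda>F. \<mu> * x F)" and "real tent_bound \<le> \<mu>"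
    and le_M: "\<forall>\<tau>\<in>faces K r. \<bar>ridge_sum x \<tau>\<bar> \<le> M"
    and \<sigma>: "\<sigma> \<in> faces K r" "\<bar>ridge_sum x \<sigma>\<bar> = M" and "0 < M"
  shows "\<mu> = real tent_bound" "weight \<sigma> = tent_bound"
    "\<forall>F\<in>ridges \<sigma>. \<forall>\<tau>\<in>top_cofaces F. \<bar>ridge_sum x \<tau>\<bar> = M"
proof -
  have bound: "(\<Sum>F\<in>ridges \<sigma>. real (card (top_cofaces F))) \<le> real tent_bound"
    using weight_le[OF \<sigma>(1)] unfolding weight_def of_nat_sum[symmetric] of_nat_le_iff .
  have le: "\<forall>F\<in>ridges \<sigma>. \<forall>\<tau>\<in>top_cofaces F. \<bar>ridge_sum x \<tau>\<bar> \<le> M"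
    using le_M unfolding top_cofaces_def by blast
  note max = double_sum_max_principle[OF finite_ridges finite_top_cofaces le
      eigenvector_ridge_sum_eq[OF eig] \<sigma>(2) \<open>0 < M\<close> bound assms(2)]
  show "\<mu> = real tent_bound" by (rule max(1))
  show "weight \<sigma> = tent_bound"
    using max(2) unfolding weight_def of_nat_sum[symmetric] of_nat_eq_iff .
  show "\<forall>F\<in>ridges \<sigma>. \<forall>\<tau>\<in>top_cofaces F. \<bar>ridge_sum x \<tau>\<bar> = M" by (rule max(3))
qed

lemma Qup_eigenvalue_ge_tent_bound:
  assumes "is_eigenvalue_Qup K (r - 1) \<mu>" and "real tent_bound \<le> \<mu>"
  shows "\<mu> = real tent_bound \<and> (\<exists>S. S \<noteq> {} \<and> saturated S)"
proof -
  obtain x where x: "x \<in> chains K (r - 1)" "x \<noteq> (\<lambda>_. 0)"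
    and eig: "signless_up_laplacian K (r - 1) x = (\<lambda>F. \<mu> * x F)"
    using assms(1) unfolding is_eigenvalue_Qup_def by blast
  have "0 < \<mu>" using assms(2) unfolding tent_bound_def by linarith
  have "\<exists>\<sigma>\<in>faces K r. ridge_sum x \<sigma> \<noteq> 0"
  proof (rule ccontr)
    assume "\<not> ?thesis"
    then have "x F = 0" for F
      using eigenvector_ridge_eq[OF eig, of F] x(1) \<open>0 < \<mu>\<close> unfolding chains_def top_cofaces_def
      by (cases "F \<in> faces K (r - 1)") auto
    then show False using x(2) by auto
  qed
  define M where "M = Max ((\<lambda>\<sigma>. \<bar>ridge_sum x \<sigma>\<bar>) ` faces K r)"
  have le_M: "\<forall>\<sigma>\<in>faces K r. \<bar>ridge_sum x \<sigma>\<bar> \<le> M"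
    unfolding M_def using finite_faces by (intro ballI Max_ge) auto
  have "M \<in> (\<lambda>\<sigma>. \<bar>ridge_sum x \<sigma>\<bar>) ` faces K r"
    unfolding M_def using finite_faces top_faces_nonempty by (intro Max_in) auto
  then obtain \<sigma>\<^sub>0 where \<sigma>\<^sub>0: "\<sigma>\<^sub>0 \<in> faces K r" "\<bar>ridge_sum x \<sigma>\<^sub>0\<bar> = M" by auto
  have "0 < M" using \<open>\<exists>\<sigma>\<in>faces K r. ridge_sum x \<sigma> \<noteq> 0\<close> le_M by fastforce
  define S where "S = {\<sigma> \<in> faces K r. \<bar>ridge_sum x \<sigma>\<bar> = M}"
  note max = ridge_sum_max_modulus[OF eig assms(2) le_M _ _ \<open>0 < M\<close>]
  have "top_cofaces F \<subseteq> S" if "\<sigma> \<in> S" "F \<in> ridges \<sigma>" for \<sigma> F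
    using max(3) that unfolding S_def top_cofaces_def by blast
  then have "saturated S"
    using max(2) unfolding saturated_def S_def by blast
  moreover have "\<sigma>\<^sub>0 \<in> S" using \<sigma>\<^sub>0 unfolding S_def by blast
  ultimately show ?thesis using max(1)[OF \<sigma>\<^sub>0] by blast
qed

lemma Qup_eigenvalue_le_tent_bound:
  assumes "is_eigenvalue_Qup K (r - 1) \<mu>"
  shows "\<mu> \<le> real tent_bound"
  using Qup_eigenvalue_ge_tent_bound[OF assms] by fastforce

definition apex :: "'a set \<Rightarrow> 'a \<Rightarrow> bool" where
  "apex \<sigma> c \<longleftrightarrow> c \<in> \<sigma> \<and> (\<forall>w\<in>V - \<sigma>. \<forall>v\<in>\<sigma>. insert w (\<sigma> - {v}) \<in> K \<longleftrightarrow> v \<noteq> c)"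

context
  fixes S :: "'a set set"
  assumes S: "saturated S"
begin

lemma saturated_faceD:
  assumes "\<sigma> \<in> S" shows "\<sigma> \<in> faces K r" "\<sigma> \<in> K" "finite \<sigma>" "card \<sigma> = r + 1" "\<sigma> \<subseteq> V"
  using assms S faceD unfolding saturated_def by blast+

lemma saturated_exchange_count:
  assumes \<sigma>: "\<sigma> \<in> S" and w: "w \<in> V - \<sigma>"
  shows "exchange_count \<sigma> w = r"
proof -
  have "card (V - \<sigma>) = card V - (r + 1)"
    using saturated_faceD[OF \<sigma>] finite_V by (simp add: card_Diff_subset)
  moreover have "weight \<sigma> = tent_bound" using S \<sigma> unfolding saturated_def by blast
  ultimately have "(\<Sum>w\<in>V - \<sigma>. exchange_count \<sigma> w) = (\<Sum>w\<in>V - \<sigma>. r)"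
    using weight_eq[OF saturated_faceD(1)[OF \<sigma>]] tent_bound_eq by (simp add: mult.commute)
  then show ?thesis
    using sum_mono_eqD[of "V - \<sigma>" "exchange_count \<sigma>" "\<lambda>_. r" w] finite_V w
      exchange_count_le[OF saturated_faceD(1)[OF \<sigma>]] by blast
qed

lemma saturated_exchange_closed:
  assumes \<sigma>: "\<sigma> \<in> S" and v: "v \<in> \<sigma>" and w: "w \<in> V - \<sigma>" and "insert w (\<sigma> - {v}) \<in> K"
  shows "insert w (\<sigma> - {v}) \<in> S"
proof -
  have "\<sigma> - {v} \<in> ridges \<sigma>" using remove_vertex_ridge[OF saturated_faceD(1)[OF \<sigma>] v] .
  moreover have "insert w (\<sigma> - {v}) \<in> top_cofaces (\<sigma> - {v})"
    using assms saturated_faceD[OF \<sigma>] unfolding top_cofaces_def faces_def by auto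
  ultimately show ?thesis using S \<sigma> unfolding saturated_def by blast
qed

lemma blocked_vertex_unique:
  assumes \<sigma>: "\<sigma> \<in> S" and w: "w \<in> V - \<sigma>"
  obtains b where "{v \<in> \<sigma>. insert w (\<sigma> - {v}) \<notin> K} = {b}"
proof -
  have "{v \<in> \<sigma>. insert w (\<sigma> - {v}) \<notin> K} = \<sigma> - {v \<in> \<sigma>. insert w (\<sigma> - {v}) \<in> K}" by blast
  then have "card {v \<in> \<sigma>. insert w (\<sigma> - {v}) \<notin> K} = 1"
    using saturated_exchange_count[OF \<sigma> w] saturated_faceD[OF \<sigma>]
    unfolding exchange_count_def by (simp add: card_Diff_subset)
  then show ?thesis using that card_1_singletonE by blast
qed

lemma exchange_mem_unless_blocked:
  assumes \<sigma>: "\<sigma> \<in> S" and w: "w \<in> V - \<sigma>" and b: "b \<in> \<sigma>" "insert w (\<sigma> - {b}) \<notin> K"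
    and v: "v \<in> \<sigma>" "v \<noteq> b"
  shows "insert w (\<sigma> - {v}) \<in> K"
proof -
  obtain b' where b': "{v \<in> \<sigma>. insert w (\<sigma> - {v}) \<notin> K} = {b'}"
    using blocked_vertex_unique[OF \<sigma> w] .
  show ?thesis
  proof (rule ccontr)
    assume "insert w (\<sigma> - {v}) \<notin> K"
    then have "v \<in> {b'}" "b \<in> {b'}" using b' b v by blast+
    then show False using v(2) by simp
  qed
qed

lemma exchange_simplex_facet_mem:
  assumes \<sigma>: "\<sigma> \<in> S" and w: "w \<in> V - \<sigma>" and b: "b \<in> \<sigma>" "insert w (\<sigma> - {b}) \<notin> K"
    and F: "F \<subseteq> insert w \<sigma>" "card F = r + 1" "F \<noteq> insert w (\<sigma> - {b})"
  shows "F \<in> K"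
proof -
  note \<sigma>_facts = saturated_faceD[OF \<sigma>]
  have "finite (insert w \<sigma>)" "card (insert w \<sigma>) = Suc (card F)" using \<sigma>_facts w F(2) by simp_all
  then obtain t where t: "t \<in> insert w \<sigma>" "F = insert w \<sigma> - {t}"
    using subset_card_Suc_removeE[OF _ F(1)] by blast
  show ?thesis
  proof (cases "t = w")
    case True
    then show ?thesis using t(2) w \<sigma>_facts(2) by simp
  next
    case False
    then have "t \<in> \<sigma>" "F = insert w (\<sigma> - {t})" using t by auto
    moreover have "t \<noteq> b" using F(3) \<open>F = insert w (\<sigma> - {t})\<close> by blast
    ultimately show ?thesis using exchange_mem_unless_blocked[OF \<sigma> w b] by simp
  qed
qed

text \<open>Two different outside vertices are blocked by the same vertex of \<open>\<sigma>\<close>; otherwise the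
  simplices \<open>\<sigma> + w\<^sub>2\<close> and \<open>\<sigma> - v\<^sub>2 + w\<^sub>1 + w\<^sub>2\<close> would be glued along their only missing facet.\<close>
lemma blocked_vertex_same:
  assumes \<sigma>: "\<sigma> \<in> S" and w: "w\<^sub>1 \<in> V - \<sigma>" "w\<^sub>2 \<in> V - \<sigma>" "w\<^sub>1 \<noteq> w\<^sub>2"
    and v: "v\<^sub>1 \<in> \<sigma>" "v\<^sub>2 \<in> \<sigma>" "insert w\<^sub>1 (\<sigma> - {v\<^sub>1}) \<notin> K" "insert w\<^sub>2 (\<sigma> - {v\<^sub>2}) \<notin> K"
  shows "v\<^sub>1 = v\<^sub>2"
proof (rule ccontr)
  assume "v\<^sub>1 \<noteq> v\<^sub>2"
  note \<sigma>_facts = saturated_faceD[OF \<sigma>]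
  define \<sigma>' where "\<sigma>' = insert w\<^sub>1 (\<sigma> - {v\<^sub>2})"
  define P where "P = insert w\<^sub>2 (\<sigma> - {v\<^sub>2})"
  have "\<sigma>' \<in> K"
    unfolding \<sigma>'_def using exchange_mem_unless_blocked[OF \<sigma> w(1) v(1,3) v(2)] \<open>v\<^sub>1 \<noteq> v\<^sub>2\<close> by blast
  then have \<sigma>': "\<sigma>' \<in> S" unfolding \<sigma>'_def using saturated_exchange_closed[OF \<sigma> v(2) w(1)] by blast
  have w\<^sub>2': "w\<^sub>2 \<in> V - \<sigma>'" "w\<^sub>1 \<in> \<sigma>'" and P': "insert w\<^sub>2 (\<sigma>' - {w\<^sub>1}) = P"
    using w v(2) unfolding \<sigma>'_def P_def by auto
  have blocked': "insert w\<^sub>2 (\<sigma>' - {w\<^sub>1}) \<notin> K" using v(4) P' unfolding P_def by simp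
  have "finite (insert w\<^sub>2 \<sigma>)" "finite (insert w\<^sub>2 \<sigma>')"
    and "card (insert w\<^sub>2 \<sigma>) = r + 2" "card (insert w\<^sub>2 \<sigma>') = r + 2"
    and "insert w\<^sub>2 \<sigma> \<inter> insert w\<^sub>2 \<sigma>' = P" "card P = r + 1"
    using \<sigma>_facts w v unfolding \<sigma>'_def P_def by (auto simp: card_insert_if)
  then obtain F where F: "F \<subseteq> insert w\<^sub>2 \<sigma> \<or> F \<subseteq> insert w\<^sub>2 \<sigma>'" "card F = r + 1" "F \<noteq> P" "F \<notin> K"
    using no_hollow_simplex_pair by blast
  have "F \<in> K"
  proof (cases "F \<subseteq> insert w\<^sub>2 \<sigma>")
    case True
    then show ?thesis
      using exchange_simplex_facet_mem[OF \<sigma> w(2) v(2,4)] F(2,3) unfolding P_def by blast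
  next
    case False
    then have "F \<subseteq> insert w\<^sub>2 \<sigma>'" using F(1) by blast
    then show ?thesis
      using exchange_simplex_facet_mem[OF \<sigma>' w\<^sub>2'(1,2) blocked'] F(2,3) P' by blast
  qed
  then show False using F(4) by contradiction
qed

lemma apex_exists:
  assumes \<sigma>: "\<sigma> \<in> S" obtains c where "apex \<sigma> c"
proof (cases "V - \<sigma> = {}")
  case True
  obtain c where "c \<in> \<sigma>" using saturated_faceD(4)[OF \<sigma>] by fastforce
  then show ?thesis using that True unfolding apex_def by blast
next
  case False
  then obtain w\<^sub>0 where w\<^sub>0: "w\<^sub>0 \<in> V - \<sigma>" by blast
  obtain c where c: "{v \<in> \<sigma>. insert w\<^sub>0 (\<sigma> - {v}) \<notin> K} = {c}"
    using blocked_vertex_unique[OF \<sigma> w\<^sub>0] .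
  have "insert w (\<sigma> - {v}) \<in> K \<longleftrightarrow> v \<noteq> c" if w: "w \<in> V - \<sigma>" and v: "v \<in> \<sigma>" for w v
  proof -
    obtain b where b: "{v \<in> \<sigma>. insert w (\<sigma> - {v}) \<notin> K} = {b}"
      using blocked_vertex_unique[OF \<sigma> w] .
    have "b = c"
    proof (cases "w = w\<^sub>0")
      case True then show ?thesis using b c by auto
    next
      case False
      show ?thesis using blocked_vertex_same[OF \<sigma> w w\<^sub>0 False] b c by blast
    qed
    then show ?thesis using b v by blast
  qed
  moreover have "c \<in> \<sigma>" using c by blast
  ultimately show ?thesis using that unfolding apex_def by blast
qed

lemma apex_exchange:
  assumes \<sigma>: "\<sigma> \<in> S" and c: "apex \<sigma> c" and u: "u \<in> \<sigma>" "u \<noteq> c" and w: "w \<in> V - \<sigma>"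
  shows "insert w (\<sigma> - {u}) \<in> S \<and> apex (insert w (\<sigma> - {u})) c"
proof -
  define \<sigma>' where "\<sigma>' = insert w (\<sigma> - {u})"
  have "\<sigma>' \<in> K" using c u w unfolding apex_def \<sigma>'_def by blast
  then have \<sigma>': "\<sigma>' \<in> S" using saturated_exchange_closed[OF \<sigma> u(1) w] unfolding \<sigma>'_def by blast
  obtain c' where c': "apex \<sigma>' c'" using apex_exists[OF \<sigma>'] .
  have "u \<in> V - \<sigma>'" using u w saturated_faceD(5)[OF \<sigma>] unfolding \<sigma>'_def by auto
  moreover have "c \<in> \<sigma>'" using c u unfolding apex_def \<sigma>'_def by auto
  moreover have "insert u (\<sigma>' - {c}) = insert w (\<sigma> - {c})"
    using u w c unfolding apex_def \<sigma>'_def by auto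
  then have "insert u (\<sigma>' - {c}) \<notin> K" using c w unfolding apex_def by auto
  ultimately have "c' = c" using c' unfolding apex_def by blast
  then show ?thesis using \<sigma>' c' unfolding \<sigma>'_def by blast
qed

lemma apex_reaches:
  assumes "card (T - \<sigma>) = k" "\<sigma> \<in> S" "apex \<sigma> c" "T \<subseteq> V" "card T = r + 1" "c \<in> T"
  shows "T \<in> S"
  using assms
proof (induction k arbitrary: \<sigma>)
  case 0
  have "finite T" using "0.prems"(4) finite_V finite_subset by blast
  then have "T \<subseteq> \<sigma>" using "0.prems"(1) by auto
  then have "T = \<sigma>" using card_subset_eq saturated_faceD[OF "0.prems"(2)] "0.prems"(5) by metis
  then show ?case using "0.prems"(2) by simp
next
  case (Suc k)
  note \<sigma>_facts = saturated_faceD[OF Suc.prems(2)]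
  have fin: "finite T" using Suc.prems(4) finite_V finite_subset by blast
  obtain w where w: "w \<in> T - \<sigma>" using Suc.prems(1) by (metis card.empty ex_in_conv nat.simps(3))
  have "\<not> \<sigma> \<subseteq> T"
  proof
    assume "\<sigma> \<subseteq> T"
    then have "\<sigma> = T" using card_subset_eq[OF fin] \<sigma>_facts Suc.prems(5) by auto
    then show False using w by blast
  qed
  then obtain u where u: "u \<in> \<sigma>" "u \<notin> T" by blast
  have "u \<noteq> c" using u Suc.prems(6) by blast
  moreover have "w \<in> V - \<sigma>" using w Suc.prems(4) by blast
  ultimately have step: "insert w (\<sigma> - {u}) \<in> S" "apex (insert w (\<sigma> - {u})) c"
    using apex_exchange[OF Suc.prems(2,3) u(1)] by blast+
  have "T - insert w (\<sigma> - {u}) = (T - \<sigma>) - {w}" using u by blast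
  then have "card (T - insert w (\<sigma> - {u})) = k" using Suc.prems(1) w fin by simp
  then show ?case using Suc.IH[OF _ step] Suc.prems(4-6) by blast
qed

text \<open>Every \<open>(r+1)\<close>-set through the apex lies in \<open>S\<close>; a top face avoiding the apex would
  close up a hollow simplex with it.\<close>
lemma saturated_cone:
  assumes "S \<noteq> {}"
  obtains c where "faces K r = {T. T \<subseteq> V \<and> card T = r + 1 \<and> c \<in> T}"
proof -
  obtain \<sigma> where \<sigma>: "\<sigma> \<in> S" using assms by blast
  obtain c where c: "apex \<sigma> c" using apex_exists[OF \<sigma>] .
  have "c \<in> V" using c saturated_faceD(5)[OF \<sigma>] unfolding apex_def by blast
  have cone_in_K: "T \<in> K" if "T \<subseteq> V" "card T = r + 1" "c \<in> T" for T
    using saturated_faceD(2)[OF apex_reaches[OF refl \<sigma> c that]] .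
  have apex_in_top_face: "c \<in> \<tau>" if \<tau>: "\<tau> \<in> faces K r" for \<tau>
  proof (rule ccontr)
    assume "c \<notin> \<tau>"
    note \<tau>_facts = faceD[OF \<tau>]
    have "insert c \<tau> - {t} \<in> K" if "t \<in> insert c \<tau>" for t
    proof (cases "t = c")
      case True
      then show ?thesis using \<open>c \<notin> \<tau>\<close> \<tau>_facts(1) by simp
    next
      case False
      then have "insert c \<tau> - {t} = insert c (\<tau> - {t})" "t \<in> \<tau>" using that by auto
      then show ?thesis
        using cone_in_K[of "insert c (\<tau> - {t})"] \<tau>_facts \<open>c \<notin> \<tau>\<close> \<open>c \<in> V\<close> by auto
    qed
    moreover have "finite (insert c \<tau>)" "card (insert c \<tau>) = r + 2"
      using \<tau>_facts \<open>c \<notin> \<tau>\<close> by simp_all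
    ultimately show False using no_hollow_simplex by blast
  qed
  have "faces K r = {T. T \<subseteq> V \<and> card T = r + 1 \<and> c \<in> T}"
  proof (rule Set.set_eqI, rule iffI)
    fix T assume "T \<in> faces K r"
    then show "T \<in> {T. T \<subseteq> V \<and> card T = r + 1 \<and> c \<in> T}"
      using faceD[of T r] apex_in_top_face[of T] by simp
  next
    fix T assume "T \<in> {T. T \<subseteq> V \<and> card T = r + 1 \<and> c \<in> T}"
    then show "T \<in> faces K r" using cone_in_K unfolding faces_def by simp
  qed
  then show ?thesis by (rule that)
qed

end

lemma tent_bound_Qup_eigenvalue_iff:
  "is_eigenvalue_Qup K (r - 1) (real tent_bound) \<longleftrightarrow> (\<exists>c. K = cone_complex V r c)"
proof
  assume "is_eigenvalue_Qup K (r - 1) (real tent_bound)"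
  then obtain S where "S \<noteq> {}" "saturated S" using Qup_eigenvalue_ge_tent_bound by blast
  then obtain c where "faces K r = {T. T \<subseteq> V \<and> card T = r + 1 \<and> c \<in> T}"
    using saturated_cone by blast
  then show "\<exists>c. K = cone_complex V r c" using eq_cone_complex_iff by blast
next
  assume "\<exists>c. K = cone_complex V r c"
  then obtain c where "faces K r = {T. T \<subseteq> V \<and> card T = r + 1 \<and> c \<in> T}"
    using eq_cone_complex_iff by blast
  then show "is_eigenvalue_Qup K (r - 1) (real tent_bound)" by (rule cone_Qup_eigenvalue)
qed

end

theorem mainTheorem10:
  fixes V :: "'a::linorder set" and K :: "'a set set" and r n :: nat
  assumes "simplicial_complex V K"
    and "card V = n"
    and "r \<ge> 1"
    and "n \<ge> r + 1"
    and "pure_dim K r"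
    and "\<forall>i\<in>{1..r}. betti K i = 0"
  shows "q_up K (r - 1) \<le> real (r * n - r ^ 2 + 1)
    \<and> (q_up K (r - 1) = real (r * n - r ^ 2 + 1) \<longleftrightarrow> complex_iso V K {1..n} (tented n r))"
proof -
  interpret top_acyclic_complex V K r
    using assms by unfold_locales auto
  have bound: "r * n - r ^ 2 + 1 = tent_bound"
    unfolding tent_bound_def assms(2) by (simp add: diff_mult_distrib2 power2_eq_square)
  let ?E = "{\<mu>. is_eigenvalue_Qup K (r - 1) \<mu>}"
  note E = Qup_eigenvalues_finite_nonempty[OF ridge_faces_nonempty]
  have le: "Max ?E \<le> real tent_bound"
    unfolding Max_le_iff[OF E] using Qup_eigenvalue_le_tent_bound by blast
  have "Max ?E = real tent_bound \<longleftrightarrow> is_eigenvalue_Qup K (r - 1) (real tent_bound)"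
  proof
    assume "Max ?E = real tent_bound"
    then show "is_eigenvalue_Qup K (r - 1) (real tent_bound)" using Max_in[OF E] by simp
  next
    assume "is_eigenvalue_Qup K (r - 1) (real tent_bound)"
    then show "Max ?E = real tent_bound" using Max_ge[OF E(1)] le by fastforce
  qed
  then show ?thesis
    unfolding q_up_def bound using le tent_bound_Qup_eigenvalue_iff iso_tented_iff_cone[OF assms(2)]
    by simp
qed

end
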